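(* Let $0<H<1$, $1-H<\alpha<1$, let $B^H$ be a fractional Brownian motion, and for $0\le t_2<t_1$ put $X(\mathbf t)=\frac{B^H_{t_1}-B^H_{t_2}}{(t_1-t_2)^{1-\alpha}}+\int_{t_2}^{t_1}\frac{B^H_u-B^H_{t_2}}{(u-t_2)^{2-\alpha}}du$, $\mathbf t=(t_1,t_2)$. Then, with constants $C(H,\alpha)$ depending only on $H,\alpha$: 1) for all $0\le t_2<t_1$, $(EX(\mathbf t)^2)^{1/2}\le C(H,\alpha)(t_1-t_2)^{H+\alpha-1}$; 2)(a) if $H+\alpha\le\frac32$, then for all $0\le t_2<t_1$, $0\le s_2<s_1$ and every $0<\varepsilon<(H+\alpha-1)\wedge\frac12$, $(E|X(\mathbf t)-X(\mathbf s)|^2)^{1/2}\le C(H,\alpha)(1+\varepsilon^{-1})(|t_1-s_1|\vee|t_2-s_2|)^{H+\alpha-1-\varepsilon}(t_1\vee s_1)^\varepsilon$, with $C(H,\alpha)$ independent of $\varepsilon$ and of $\mathbf t,\mathbf s$; 2)(b) if $H+\alpha>\frac32$, then for all $0\le t_2<t_1$, $0\le s_2<s_1$, $(E|X(\mathbf t)-X(\mathbf s)|^2)^{1/2}\le C(H,\alpha)(|t_1-s_1|\vee|t_2-s_2|)^{1/2}(t_1\vee s_1)^{H+\alpha-\frac32}$.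
   Context: A fractional Brownian motion with Hurst index $H\in(0,1)$ is a centered Gaussian process $B^H$ with $B^H_0=0$ and $EB^H_tB^H_s=\frac12(t^{2H}+s^{2H}-|t-s|^{2H})$; its continuous modification is used. *)

theory Defs
  imports "HOL-Probability.Probability"
begin

definition centered_gaussian_rv :: "'a measure \<Rightarrow> ('a \<Rightarrow> real) \<Rightarrow> bool" where
  "centered_gaussian_rv M X \<longleftrightarrow>
     (AE \<omega> in M. X \<omega> = 0) \<or> (\<exists>\<sigma>>0. distributed M lborel X (normal_density 0 \<sigma>))"

definition fbm :: "'a measure \<Rightarrow> real \<Rightarrow> (real \<Rightarrow> 'a \<Rightarrow> real) \<Rightarrow> bool" where
  "fbm M H B \<longleftrightarrow>
     prob_space M \<and>
     (\<forall>t. B t \<in> borel_measurable M) \<and>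
     (AE \<omega> in M. B 0 \<omega> = 0) \<and>
     (\<forall>I c. finite I \<and> I \<subseteq> {0..} \<longrightarrow>
        centered_gaussian_rv M (\<lambda>\<omega>. \<Sum>t\<in>I. c t * B t \<omega>)) \<and>
     (\<forall>s t. 0 \<le> s \<and> 0 \<le> t \<longrightarrow>
        prob_space.expectation M (\<lambda>\<omega>. B t \<omega> * B s \<omega>)
          = (t powr (2*H) + s powr (2*H) - \<bar>t - s\<bar> powr (2*H)) / 2) \<and>
     (\<forall>\<omega>\<in>space M. continuous_on {0..} (\<lambda>t. B t \<omega>))"

definition fbm_X :: "real \<Rightarrow> (real \<Rightarrow> 'a \<Rightarrow> real) \<Rightarrow> real \<Rightarrow> real \<Rightarrow> 'a \<Rightarrow> real" where
  "fbm_X \<alpha> B t1 t2 \<omega> =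
     (B t1 \<omega> - B t2 \<omega>) / (t1 - t2) powr (1 - \<alpha>)
     + (LBINT u=t2..t1. (B u \<omega> - B t2 \<omega>) / (u - t2) powr (2 - \<alpha>))"

end

theory Submission
  imports Defs
begin

(* Put \<gamma> = H + \<alpha> - 1 \<in> (0,1).  Apart from path continuity (for measurability), the only
   property of B that is used is E (B a - B b)^2 = |a - b|^(2H).  The Lebesgue integral in X is controlled by an integral
   Minkowski inequality: if E F(u)^2 \<le> g(u)^2 on (a,b), then E (\<integral>_a^b F)^2 \<le> (\<integral>_a^b g)^2
   (Tonelli plus a weighted Cauchy-Schwarz inequality).  This yields
   (1) E X(t1,t2)^2 \<le> C (t1 - t2)^(2\<gamma>), and
   (2) the uniform Hoelder estimate E (X(t) - X(s))^2 \<le> C D^(2\<gamma>), D = max |t1-s1| |t2-s2|.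
       If one of the two intervals has length at most 3D, (2) follows from (1).  Otherwise we
       move first the right and then the left end point; each increment splits into a few
       increments of B with small coefficients and kernel integrals, each of size O(D^\<gamma>).
   Since D \<le> max t1 s1, we have D^\<gamma> \<le> D^(\<gamma>-\<epsilon>) (max t1 s1)^\<epsilon> and, for \<gamma> > 1/2,
   D^\<gamma> \<le> D^(1/2) (max t1 s1)^(\<gamma>-1/2); so both estimates of part 2 of the theorem follow
   from (2) with constants independent of \<epsilon> (the case distinction H + \<alpha> \<le> 3/2 is not needed). *)

section \<open>Elementary real analysis\<close>

lemma powr_neg_diff_le:
  fixes x y \<beta> :: real
  assumes "0 < x" "x \<le> y" "0 < \<beta>"
  shows "x powr (-\<beta>) - y powr (-\<beta>) \<le> \<beta> * (y - x) * x powr (-\<beta> - 1)"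
proof (cases "x = y")
  case False
  with assms have xy: "x < y" by simp
  have "\<exists>z>x. z < y \<and> (\<lambda>z. z powr (-\<beta>)) y - (\<lambda>z. z powr (-\<beta>)) x = (y - x) * (-\<beta> * z powr (-\<beta> - 1))"
    by (rule MVT2[OF xy]) (use assms in \<open>auto intro!: derivative_eq_intros simp: powr_diff\<close>)
  then obtain z where z: "x < z" "z < y"
    and mvt: "y powr (-\<beta>) - x powr (-\<beta>) = (y - x) * (-\<beta> * z powr (-\<beta> - 1))" by auto
  have "z powr (-\<beta> - 1) \<le> x powr (-\<beta> - 1)"
    using z assms by (intro powr_mono2') auto
  then have "\<beta> * (y - x) * z powr (-\<beta> - 1) \<le> \<beta> * (y - x) * x powr (-\<beta> - 1)"
    using assms xy by (intro mult_left_mono) auto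
  then show ?thesis using mvt by (simp add: algebra_simps)
qed simp

lemma nn_integral_powr_left_end:
  fixes a b e :: real
  assumes "0 < e" "a < b"
  shows "(\<integral>\<^sup>+u. ennreal ((u - a) powr (e - 1)) * indicator {a<..<b} u \<partial>lborel) = ennreal ((b - a) powr e / e)"
proof -
  let ?F = "\<lambda>u. (u - a) powr e / e"
  have c: "continuous_on {a..b} ?F"
    using assms by (intro continuous_on_divide continuous_on_powr' continuous_intros) auto
  have "(?F \<longlongrightarrow> ?F a) (at_right a)"
    using c assms unfolding continuous_on_def by (metis atLeastAtMost_iff order_refl less_imp_le at_within_Icc_at_right)
  then have lim_a: "((?F \<circ> real_of_ereal) \<longlongrightarrow> 0) (at_right (ereal a))"
    by (simp add: ereal_tendsto_simps)
  have "(?F \<longlongrightarrow> ?F b) (at_left b)"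
    using c assms unfolding continuous_on_def by (metis atLeastAtMost_iff at_within_Icc_at_left order_refl less_imp_le)
  then have lim_b: "((?F \<circ> real_of_ereal) \<longlongrightarrow> (b - a) powr e / e) (at_left (ereal b))"
    by (simp add: ereal_tendsto_simps)
  have FTC: "set_integrable lborel (einterval a b) (\<lambda>u. (u - a) powr (e - 1))"
    "(LBINT u=ereal a..ereal b. (u - a) powr (e - 1)) = (b - a) powr e / e - 0"
    by (rule interval_integral_FTC_nonneg[OF _ _ _ _ lim_a lim_b];
        use assms in \<open>auto intro!: derivative_eq_intros continuous_intros simp: powr_diff\<close>)+
  have "(\<integral>\<^sup>+u. ennreal ((u - a) powr (e - 1)) * indicator {a<..<b} u \<partial>lborel)
      = (\<integral>\<^sup>+u. ennreal (indicator {a<..<b} u *\<^sub>R (u - a) powr (e - 1)) \<partial>lborel)"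
    by (intro nn_integral_cong) (auto split: split_indicator)
  also have "\<dots> = ennreal (\<integral>u. indicator {a<..<b} u *\<^sub>R (u - a) powr (e - 1) \<partial>lborel)"
    using FTC(1) by (intro nn_integral_eq_integral) (auto simp: set_integrable_def)
  also have "\<dots> = ennreal ((b - a) powr e / e)"
    using FTC(2) assms
    by (simp add: interval_integral_Ioo interval_integral_eq_integral set_lebesgue_integral_def)
  finally show ?thesis .
qed

lemma nn_integral_powr_tail:
  fixes d \<delta> e b :: real
  assumes "e < 1" "0 < \<delta>"
  shows "(\<integral>\<^sup>+u. ennreal ((u - d) powr (e - 2)) * indicator {d+\<delta>..<b} u \<partial>lborel) \<le> ennreal (\<delta> powr (e - 1) / (1 - e))"
proof -
  have "(\<integral>\<^sup>+u. ennreal ((u - d) powr (e - 2)) * indicator {d+\<delta>..<b} u \<partial>lborel)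
     \<le> (\<integral>\<^sup>+u. ennreal ((u - d) powr (e - 2)) * indicator {d+\<delta>..} u \<partial>lborel)"
    by (intro nn_integral_mono) (auto split: split_indicator)
  also have "\<dots> = ennreal (0 - (- ((d + \<delta> - d) powr (e - 1) / (1 - e))))"
  proof (rule nn_integral_FTC_atLeast)
    fix x assume x: "d + \<delta> \<le> x"
    have "DERIV (\<lambda>u. - ((u - d) powr (e - 1) / (1 - e))) x :> - ((e - 1) * (x - d) powr (e - 1 - 1) / (1 - e))"
      using x assms by (auto intro!: derivative_eq_intros)
    moreover have "- ((e - 1) * (x - d) powr (e - 1 - 1) / (1 - e)) = (x - d) powr (e - 2)"
      using assms by (simp add: field_simps)
    ultimately show "DERIV (\<lambda>u. - ((u - d) powr (e - 1) / (1 - e))) x :> (x - d) powr (e - 2)"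
      by simp
  next
    have "LIM u at_top. u - d :> at_top"
      using filterlim_tendsto_add_at_top[OF tendsto_const filterlim_ident, of "- d"] by simp
    then have "((\<lambda>u. (u - d) powr (e - 1)) \<longlongrightarrow> 0) at_top"
      using assms by (intro tendsto_neg_powr) auto
    from tendsto_minus[OF tendsto_divide_zero[OF this, of "1 - e"]]
    show "((\<lambda>u. - ((u - d) powr (e - 1) / (1 - e))) \<longlongrightarrow> 0) at_top"
      by simp
  qed auto
  also have "\<dots> = ennreal (\<delta> powr (e - 1) / (1 - e))"
    by simp
  finally show ?thesis .
qed

lemma powr_minus_one_mult: fixes D e :: real shows "0 < D \<Longrightarrow> D powr (e - 1) * D = D powr e"
  using powr_add[of D "e - 1" 1] by simp

lemma square_powr: fixes x a :: real shows "0 \<le> x \<Longrightarrow> (x powr a)\<^sup>2 = x powr (2 * a)"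
  by (cases "x = 0") (simp_all add: powr_realpow[symmetric] powr_powr mult.commute)

text \<open>A power of \<open>D \<le> T\<close> may be traded for the same power of \<open>T\<close>; this converts the
  uniform Hoelder estimate into the two shapes required by the theorem.\<close>
lemma powr_split_bound:
  fixes K D T e1 e2 k :: real
  assumes "0 \<le> K" "0 \<le> D" "D \<le> T" "0 < e2" "0 \<le> e1" "1 \<le> k"
  shows "K * D powr (2 * (e1 + e2)) \<le> (sqrt K * k * D powr e1 * T powr e2)\<^sup>2"
proof (cases "D = 0")
  case False
  then have D: "0 < D" using assms by simp
  have "D powr (e1 + e2) = D powr e1 * D powr e2" by (simp add: powr_add)
  also have "\<dots> \<le> D powr e1 * T powr e2"
    using assms D by (intro mult_left_mono powr_mono2) auto
  also have "\<dots> \<le> k * (D powr e1 * T powr e2)"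
    using mult_right_mono[OF \<open>1 \<le> k\<close>, of "D powr e1 * T powr e2"] by simp
  finally have "D powr (e1 + e2) \<le> k * D powr e1 * T powr e2" by (simp add: mult.assoc)
  then have "(sqrt K * D powr (e1 + e2))\<^sup>2 \<le> (sqrt K * (k * D powr e1 * T powr e2))\<^sup>2"
    using assms by (intro power_mono mult_left_mono) auto
  then show ?thesis
    using assms D by (simp add: power_mult_distrib square_powr mult.assoc)
qed (use assms in simp)

lemma kernel_difference_le:
  fixes c d u \<alpha> H :: real
  assumes "c < d" "d < u" "\<alpha> < 2"
  shows "\<bar>(u - c) powr (\<alpha> - 2) - (u - d) powr (\<alpha> - 2)\<bar> * \<bar>u - d\<bar> powr H \<le> (u - d) powr (H + \<alpha> - 2)"
    and "\<bar>(u - c) powr (\<alpha> - 2) - (u - d) powr (\<alpha> - 2)\<bar> * \<bar>u - d\<bar> powr H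
      \<le> (2 - \<alpha>) * (d - c) * (u - d) powr (H + \<alpha> - 3)"
proof -
  have "(u - c) powr (\<alpha> - 2) \<le> (u - d) powr (\<alpha> - 2)"
    using assms by (intro powr_mono2') auto
  then have diff: "\<bar>(u - c) powr (\<alpha> - 2) - (u - d) powr (\<alpha> - 2)\<bar> = (u - d) powr (\<alpha> - 2) - (u - c) powr (\<alpha> - 2)"
    by simp
  have abs_ud: "\<bar>u - d\<bar> = u - d" using assms by simp
  have "\<bar>(u - c) powr (\<alpha> - 2) - (u - d) powr (\<alpha> - 2)\<bar> * \<bar>u - d\<bar> powr H \<le> (u - d) powr (\<alpha> - 2) * (u - d) powr H"
    unfolding diff abs_ud using assms by (intro mult_right_mono) auto
  then show "\<bar>(u - c) powr (\<alpha> - 2) - (u - d) powr (\<alpha> - 2)\<bar> * \<bar>u - d\<bar> powr H \<le> (u - d) powr (H + \<alpha> - 2)"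
    by (simp add: powr_add[symmetric] algebra_simps)
  have "(u - d) powr (-(2 - \<alpha>)) - (u - c) powr (-(2 - \<alpha>)) \<le> (2 - \<alpha>) * ((u - c) - (u - d)) * (u - d) powr (-(2 - \<alpha>) - 1)"
    using assms by (intro powr_neg_diff_le) auto
  then have "\<bar>(u - c) powr (\<alpha> - 2) - (u - d) powr (\<alpha> - 2)\<bar> * (u - d) powr H
      \<le> (2 - \<alpha>) * (d - c) * (u - d) powr (\<alpha> - 3) * (u - d) powr H"
    unfolding diff by (intro mult_right_mono) auto
  also have "\<dots> = (2 - \<alpha>) * (d - c) * (u - d) powr (H + \<alpha> - 3)"
    by (simp add: powr_add[symmetric] algebra_simps)
  finally show "\<bar>(u - c) powr (\<alpha> - 2) - (u - d) powr (\<alpha> - 2)\<bar> * \<bar>u - d\<bar> powr H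
      \<le> (2 - \<alpha>) * (d - c) * (u - d) powr (H + \<alpha> - 3)"
    using assms by simp
qed

lemma nn_integral_two_regime_bound:
  fixes d \<delta> b \<gamma> \<kappa> :: real
  assumes "0 < \<gamma>" "\<gamma> < 1" "0 < \<delta>" "0 \<le> \<kappa>"
  shows "(\<integral>\<^sup>+u. ennreal (if u < d + \<delta> then (u - d) powr (\<gamma> - 1) else \<kappa> * \<delta> * (u - d) powr (\<gamma> - 2))
             * indicator {d<..<b} u \<partial>lborel)
      \<le> ennreal ((1 / \<gamma> + \<kappa> / (1 - \<gamma>)) * \<delta> powr \<gamma>)"
proof -
  have "(\<integral>\<^sup>+u. ennreal (if u < d + \<delta> then (u - d) powr (\<gamma> - 1) else \<kappa> * \<delta> * (u - d) powr (\<gamma> - 2))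
             * indicator {d<..<b} u \<partial>lborel)
     \<le> (\<integral>\<^sup>+u. ennreal ((u - d) powr (\<gamma> - 1)) * indicator {d<..<d + \<delta>} u
          + ennreal (\<kappa> * \<delta>) * (ennreal ((u - d) powr (\<gamma> - 2)) * indicator {d + \<delta>..<b} u) \<partial>lborel)"
    using assms by (intro nn_integral_mono) (auto simp: ennreal_mult split: split_indicator)
  also have "\<dots> = (\<integral>\<^sup>+u. ennreal ((u - d) powr (\<gamma> - 1)) * indicator {d<..<d + \<delta>} u \<partial>lborel)
      + ennreal (\<kappa> * \<delta>) * (\<integral>\<^sup>+u. ennreal ((u - d) powr (\<gamma> - 2)) * indicator {d + \<delta>..<b} u \<partial>lborel)"
    by (simp add: nn_integral_add nn_integral_cmult)
  also have "\<dots> \<le> ennreal (\<delta> powr \<gamma> / \<gamma>) + ennreal (\<kappa> * \<delta>) * ennreal (\<delta> powr (\<gamma> - 1) / (1 - \<gamma>))"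
    using nn_integral_powr_left_end[of \<gamma> d "d + \<delta>"] nn_integral_powr_tail[of \<gamma> \<delta> d b] assms
    by (intro add_mono mult_left_mono) auto
  also have "\<dots> = ennreal (\<delta> powr \<gamma> / \<gamma> + \<kappa> * \<delta> * (\<delta> powr (\<gamma> - 1) / (1 - \<gamma>)))"
    using assms by (simp add: ennreal_mult[symmetric] ennreal_plus[symmetric] del: ennreal_plus)
  also have "\<delta> powr \<gamma> / \<gamma> + \<kappa> * \<delta> * (\<delta> powr (\<gamma> - 1) / (1 - \<gamma>)) = (1 / \<gamma> + \<kappa> / (1 - \<gamma>)) * \<delta> powr \<gamma>"
    using powr_minus_one_mult[OF \<open>0 < \<delta>\<close>, of \<gamma>] by (simp add: field_simps)
  finally show ?thesis .
qed

lemma short_increment_weight_le: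
  fixes y h D \<alpha> H :: real
  assumes "0 < D" "D \<le> y" "0 \<le> h" "h \<le> D" "\<alpha> < 1" "0 < H"
  shows "\<bar>y powr (\<alpha> - 1)\<bar> * \<bar>h\<bar> powr H \<le> D powr (H + \<alpha> - 1)"
proof -
  have "y powr (\<alpha> - 1) * h powr H \<le> D powr (\<alpha> - 1) * D powr H"
    using assms by (intro mult_mono powr_mono2' powr_mono2) auto
  then show ?thesis
    using assms by (simp add: powr_add[symmetric] algebra_simps)
qed

text \<open>The change \<open>y^(\<alpha>-1) - x^(\<alpha>-1)\<close> of the coefficient of a long increment (length \<open>x \<ge> D\<close>)
  when the end point moves by \<open>y - x \<le> D\<close>: by the mean value inequality it is at most
  \<open>(y - x) x^(\<alpha>-2)\<close>, so the product with \<open>x^H\<close> is at most \<open>D D^(H+\<alpha>-2) = D^(H+\<alpha>-1)\<close>.\<close>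
lemma long_increment_weight_le:
  fixes x y D \<alpha> H :: real
  assumes "0 < D" "D \<le> x" "x \<le> y" "y - x \<le> D" "0 < \<alpha>" "\<alpha> < 1" "H < 1"
  shows "\<bar>y powr (\<alpha> - 1) - x powr (\<alpha> - 1)\<bar> * \<bar>x\<bar> powr H \<le> D powr (H + \<alpha> - 1)"
proof -
  have "x powr (-(1 - \<alpha>)) - y powr (-(1 - \<alpha>)) \<le> (1 - \<alpha>) * (y - x) * x powr (-(1 - \<alpha>) - 1)"
    using assms by (intro powr_neg_diff_le) auto
  moreover have "y powr (\<alpha> - 1) \<le> x powr (\<alpha> - 1)"
    using assms by (intro powr_mono2') auto
  ultimately have "\<bar>y powr (\<alpha> - 1) - x powr (\<alpha> - 1)\<bar> * x powr H \<le> (1 - \<alpha>) * (y - x) * x powr (\<alpha> - 2) * x powr H"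
    by (intro mult_right_mono) auto
  also have "\<dots> = (1 - \<alpha>) * ((y - x) * x powr (H + \<alpha> - 2))"
    using assms by (simp add: powr_add[symmetric] algebra_simps)
  also have "\<dots> \<le> 1 * (D * D powr (H + \<alpha> - 2))"
    using assms by (intro mult_mono powr_mono2') auto
  also have "\<dots> = D powr (H + \<alpha> - 1)"
    using powr_minus_one_mult[OF \<open>0 < D\<close>, of "H + \<alpha> - 1"] by (simp add: mult.commute)
  finally show ?thesis
    using assms by simp
qed

text \<open>Composing a continuous process with
  these countably-valued times shows joint measurability in \<open>(\<omega>, u)\<close>.\<close>
lemma ceiling_grid_tendsto:
  fixes u :: real
  shows "(\<lambda>n. real_of_int \<lceil>real (Suc n) * u\<rceil> / real (Suc n)) \<longlonglongrightarrow> u"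
proof (rule tendsto_sandwich[OF _ _ tendsto_const])
  show "\<forall>\<^sub>F n in sequentially. u \<le> real_of_int \<lceil>real (Suc n) * u\<rceil> / real (Suc n)"
    by (intro always_eventually allI)
       (simp add: pos_le_divide_eq mult.commute del: of_nat_Suc)
  have "real_of_int \<lceil>real (Suc n) * u\<rceil> / real (Suc n) \<le> u + 1 / real (Suc n)" for n
  proof -
    have "real_of_int \<lceil>real (Suc n) * u\<rceil> \<le> real (Suc n) * u + 1" by linarith
    then show ?thesis by (simp add: field_simps del: of_nat_Suc)
  qed
  then show "\<forall>\<^sub>F n in sequentially. real_of_int \<lceil>real (Suc n) * u\<rceil> / real (Suc n) \<le> u + 1 / real (Suc n)"
    by simp
  have "(\<lambda>n. u + 1 / real (Suc n)) \<longlonglongrightarrow> u + 0"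
    by (intro tendsto_add tendsto_const) (rule LIMSEQ_Suc[OF lim_inverse_n'])
  then show "(\<lambda>n. u + 1 / real (Suc n)) \<longlonglongrightarrow> u" by simp
qed

section \<open>Second moments of integrals of random functions\<close>

lemma ennreal_sq_le_imp_le:
  fixes x y :: ennreal
  assumes "x\<^sup>2 \<le> y\<^sup>2" shows "x \<le> y"
proof (cases "y = \<infinity>")
  case False
  then obtain r where r: "y = ennreal r" "0 \<le> r" by (cases y) auto
  show ?thesis
  proof (cases "x = \<infinity>")
    case False
    then obtain s where s: "x = ennreal s" "0 \<le> s" by (cases x) auto
    have "ennreal (s\<^sup>2) \<le> ennreal (r\<^sup>2)" using assms r s by (simp add: ennreal_power)
    then have "s\<^sup>2 \<le> r\<^sup>2" using r(2) by (auto simp: ennreal_le_iff2)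
    then have "s \<le> r" using r(2) by (rule power2_le_imp_le)
    then show ?thesis using r s by (simp add: ennreal_leI)
  next
    case True
    with r assms show ?thesis by (simp add: ennreal_power top_unique)
  qed
qed simp

lemma set_integral_square_le_weighted:
  fixes N :: "'b measure" and f g :: "'b \<Rightarrow> real"
  assumes [measurable]: "S \<in> sets N" "f \<in> borel_measurable N" "g \<in> borel_measurable N"
    and gpos: "\<And>u. u \<in> S \<Longrightarrow> 0 < g u" and int: "set_integrable N S f"
  shows "ennreal ((set_lebesgue_integral N S f)\<^sup>2)
    \<le> (\<integral>\<^sup>+u. ennreal (g u) * indicator S u \<partial>N) * (\<integral>\<^sup>+u. ennreal ((f u)\<^sup>2 / g u) * indicator S u \<partial>N)"
proof -
  define p where "p u = ennreal (sqrt (g u)) * indicator S u" for u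
  define q where "q u = ennreal (\<bar>f u\<bar> / sqrt (g u)) * indicator S u" for u
  have "ennreal (norm (set_lebesgue_integral N S f)) \<le> (\<integral>\<^sup>+u. ennreal (norm (indicator S u *\<^sub>R f u)) \<partial>N)"
    unfolding set_lebesgue_integral_def
    by (rule integral_norm_bound_ennreal) (use int in \<open>simp add: set_integrable_def\<close>)
  also have "\<dots> = (\<integral>\<^sup>+u. p u * q u \<partial>N)"
  proof (intro nn_integral_cong)
    fix u show "ennreal (norm (indicator S u *\<^sub>R f u)) = p u * q u"
      using gpos[of u] by (cases "u \<in> S") (simp_all add: p_def q_def ennreal_mult[symmetric])
  qed
  finally have "(ennreal (norm (set_lebesgue_integral N S f)))\<^sup>2 \<le> (\<integral>\<^sup>+u. p u * q u \<partial>N)\<^sup>2"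
    by (intro power_mono) auto
  also have "\<dots> \<le> (\<integral>\<^sup>+u. (p u)\<^sup>2 \<partial>N) * (\<integral>\<^sup>+u. (q u)\<^sup>2 \<partial>N)"
    by (rule Cauchy_Schwarz_nn_integral) (simp_all add: p_def q_def)
  also have "(\<integral>\<^sup>+u. (p u)\<^sup>2 \<partial>N) = (\<integral>\<^sup>+u. ennreal (g u) * indicator S u \<partial>N)"
  proof (intro nn_integral_cong)
    fix u show "(p u)\<^sup>2 = ennreal (g u) * indicator S u"
      using gpos[of u] by (cases "u \<in> S") (simp_all add: p_def ennreal_power)
  qed
  also have "(\<integral>\<^sup>+u. (q u)\<^sup>2 \<partial>N) = (\<integral>\<^sup>+u. ennreal ((f u)\<^sup>2 / g u) * indicator S u \<partial>N)"
  proof (intro nn_integral_cong)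
    fix u show "(q u)\<^sup>2 = ennreal ((f u)\<^sup>2 / g u) * indicator S u"
      using gpos[of u] by (cases "u \<in> S") (simp_all add: q_def ennreal_power power_divide)
  qed
  finally show ?thesis by (simp add: ennreal_power)
qed

text \<open>A random function whose second moments are dominated by an integrable function \<open>g\<close>
  has almost surely integrable paths (since \<open>E |f(u)| \<le> g(u)\<close> and by Tonelli).\<close>
lemma (in prob_space) AE_set_integrable_of_moment_bound:
  fixes f :: "'a \<Rightarrow> real \<Rightarrow> real" and g :: "real \<Rightarrow> real" and S :: "real set"
  assumes [measurable]: "(\<lambda>x. f (fst x) (snd x)) \<in> borel_measurable (M \<Otimes>\<^sub>M lborel)"
      "S \<in> sets borel" "g \<in> borel_measurable borel"
    and gnn: "\<And>u. u \<in> S \<Longrightarrow> 0 \<le> g u"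
    and gint: "(\<integral>\<^sup>+u. ennreal (g u) * indicator S u \<partial>lborel) < \<infinity>"
    and mom: "\<And>u. u \<in> S \<Longrightarrow> (\<integral>\<^sup>+\<omega>. ennreal ((f \<omega> u)\<^sup>2) \<partial>M) \<le> ennreal ((g u)\<^sup>2)"
  shows "AE \<omega> in M. set_integrable lborel S (f \<omega>)"
proof -
  interpret P: pair_sigma_finite M lborel
    by (intro pair_sigma_finite.intro sigma_finite_measure_axioms sigma_finite_lborel)
  have [measurable]: "(\<lambda>\<omega>. f \<omega> u) \<in> borel_measurable M" for u
    using measurable_Pair1[of _ M lborel, OF assms(1)] by simp
  have first_moment: "(\<integral>\<^sup>+\<omega>. ennreal \<bar>f \<omega> u\<bar> \<partial>M) \<le> ennreal (g u)" if u: "u \<in> S" for u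
  proof (rule ennreal_sq_le_imp_le)
    have "(\<integral>\<^sup>+\<omega>. ennreal \<bar>f \<omega> u\<bar> * 1 \<partial>M)\<^sup>2 \<le> (\<integral>\<^sup>+\<omega>. (ennreal \<bar>f \<omega> u\<bar>)\<^sup>2 \<partial>M) * (\<integral>\<^sup>+\<omega>. 1 ^ 2 \<partial>M)"
      by (rule Cauchy_Schwarz_nn_integral) auto
    also have "\<dots> = (\<integral>\<^sup>+\<omega>. ennreal ((f \<omega> u)\<^sup>2) \<partial>M)"
      by (simp add: ennreal_power emeasure_space_1)
    also have "\<dots> \<le> (ennreal (g u))\<^sup>2"
      using mom[OF u] gnn[OF u] by (simp add: ennreal_power)
    finally show "(\<integral>\<^sup>+\<omega>. ennreal \<bar>f \<omega> u\<bar> \<partial>M)\<^sup>2 \<le> (ennreal (g u))\<^sup>2" by simp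
  qed
  have "(\<integral>\<^sup>+\<omega>. (\<integral>\<^sup>+u. ennreal \<bar>f \<omega> u\<bar> * indicator S u \<partial>lborel) \<partial>M)
      = (\<integral>\<^sup>+u. (\<integral>\<^sup>+\<omega>. ennreal \<bar>f \<omega> u\<bar> \<partial>M) * indicator S u \<partial>lborel)"
    by (subst P.Fubini'[symmetric]) (measurable, intro nn_integral_cong nn_integral_multc, measurable)
  also have "\<dots> \<le> (\<integral>\<^sup>+u. ennreal (g u) * indicator S u \<partial>lborel)"
    using first_moment by (intro nn_integral_mono) (auto split: split_indicator)
  finally have "(\<integral>\<^sup>+\<omega>. (\<integral>\<^sup>+u. ennreal \<bar>f \<omega> u\<bar> * indicator S u \<partial>lborel) \<partial>M) < \<infinity>"
    using gint by (rule le_less_trans)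
  then have "AE \<omega> in M. (\<integral>\<^sup>+u. ennreal \<bar>f \<omega> u\<bar> * indicator S u \<partial>lborel) \<noteq> \<infinity>"
    by (intro nn_integral_PInf_AE) (simp_all add: top.not_eq_extremum)
  then show ?thesis
  proof (rule AE_mp[OF _ AE_I2, rule_format])
    fix \<omega> assume \<omega>: "\<omega> \<in> space M" and fin: "(\<integral>\<^sup>+u. ennreal \<bar>f \<omega> u\<bar> * indicator S u \<partial>lborel) \<noteq> \<infinity>"
    have [measurable]: "f \<omega> \<in> borel_measurable borel"
      using measurable_Pair2[OF assms(1) \<omega>] by simp
    have "(\<integral>\<^sup>+u. ennreal (norm (indicator S u *\<^sub>R f \<omega> u)) \<partial>lborel) = (\<integral>\<^sup>+u. ennreal \<bar>f \<omega> u\<bar> * indicator S u \<partial>lborel)"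
      by (intro nn_integral_cong) (auto split: split_indicator)
    then show "set_integrable lborel S (f \<omega>)"
      unfolding set_integrable_def using fin by (intro integrableI_bounded) (auto simp: top.not_eq_extremum)
  qed
qed

lemma (in prob_space) expected_weighted_square_integral_le:
  fixes f :: "'a \<Rightarrow> real \<Rightarrow> real" and g :: "real \<Rightarrow> real" and S :: "real set"
  assumes [measurable]: "(\<lambda>x. f (fst x) (snd x)) \<in> borel_measurable (M \<Otimes>\<^sub>M lborel)"
      "S \<in> sets borel" "g \<in> borel_measurable borel"
    and gpos: "\<And>u. u \<in> S \<Longrightarrow> 0 < g u"
    and mom: "\<And>u. u \<in> S \<Longrightarrow> (\<integral>\<^sup>+\<omega>. ennreal ((f \<omega> u)\<^sup>2) \<partial>M) \<le> ennreal ((g u)\<^sup>2)"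
  shows "(\<integral>\<^sup>+\<omega>. (\<integral>\<^sup>+u. ennreal ((f \<omega> u)\<^sup>2 / g u) * indicator S u \<partial>lborel) \<partial>M)
    \<le> (\<integral>\<^sup>+u. ennreal (g u) * indicator S u \<partial>lborel)"
proof -
  interpret P: pair_sigma_finite M lborel
    by (intro pair_sigma_finite.intro sigma_finite_measure_axioms sigma_finite_lborel)
  have [measurable]: "(\<lambda>\<omega>. f \<omega> u) \<in> borel_measurable M" for u
    using measurable_Pair1[of _ M lborel, OF assms(1)] by simp
  have "(\<integral>\<^sup>+\<omega>. (\<integral>\<^sup>+u. ennreal ((f \<omega> u)\<^sup>2 / g u) * indicator S u \<partial>lborel) \<partial>M)
      = (\<integral>\<^sup>+u. (\<integral>\<^sup>+\<omega>. ennreal ((f \<omega> u)\<^sup>2 / g u) * indicator S u \<partial>M) \<partial>lborel)"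
    by (rule P.Fubini'[symmetric]) measurable
  also have "\<dots> \<le> (\<integral>\<^sup>+u. ennreal (g u) * indicator S u \<partial>lborel)"
  proof (intro nn_integral_mono)
    fix u show "(\<integral>\<^sup>+\<omega>. ennreal ((f \<omega> u)\<^sup>2 / g u) * indicator S u \<partial>M) \<le> ennreal (g u) * indicator S u"
    proof (cases "u \<in> S")
      case True
      then have g0: "0 < g u" by (rule gpos)
      have "(\<integral>\<^sup>+\<omega>. ennreal ((f \<omega> u)\<^sup>2 / g u) * indicator S u \<partial>M) = (\<integral>\<^sup>+\<omega>. ennreal ((f \<omega> u)\<^sup>2) * ennreal (1 / g u) \<partial>M)"
        using True g0 by (intro nn_integral_cong) (simp add: ennreal_mult[symmetric])
      also have "\<dots> = (\<integral>\<^sup>+\<omega>. ennreal ((f \<omega> u)\<^sup>2) \<partial>M) * ennreal (1 / g u)"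
        by (rule nn_integral_multc) measurable
      also have "\<dots> \<le> ennreal ((g u)\<^sup>2) * ennreal (1 / g u)"
        using mom[OF True] by (rule mult_right_mono) simp
      also have "\<dots> = ennreal (g u) * indicator S u"
        using g0 True by (simp add: ennreal_mult[symmetric] power2_eq_square)
      finally show ?thesis .
    qed simp
  qed
  finally show ?thesis .
qed

text \<open>Integral Minkowski inequality in \<open>L\<^sup>2(M)\<close>: if \<open>E f(u)\<^sup>2 \<le> g(u)\<^sup>2\<close> on \<open>(a,b)\<close> and
  \<open>\<integral>_a^b g \<le> G\<close>, then \<open>\<integral>_a^b f(u) du\<close> exists a.s., is measurable and has second moment
  at most \<open>G\<^sup>2\<close>: by the weighted Cauchy-Schwarz inequality with weight \<open>g\<close>,
  \<open>E (\<integral> f)\<^sup>2 \<le> (\<integral> g) \<cdot> E \<integral> f\<^sup>2/g \<le> (\<integral> g)\<^sup>2\<close>.\<close>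
lemma (in prob_space) interval_integral_moment_bound:
  fixes f :: "'a \<Rightarrow> real \<Rightarrow> real" and g :: "real \<Rightarrow> real" and a b G :: real
  assumes meas[measurable]: "(\<lambda>x. f (fst x) (snd x)) \<in> borel_measurable (M \<Otimes>\<^sub>M lborel)"
    and [measurable]: "g \<in> borel_measurable borel"
    and ab: "a < b" and G0: "0 \<le> G"
    and gpos: "\<And>u. a < u \<Longrightarrow> u < b \<Longrightarrow> 0 < g u"
    and gint: "(\<integral>\<^sup>+u. ennreal (g u) * indicator {a<..<b} u \<partial>lborel) \<le> ennreal G"
    and mom: "\<And>u. a < u \<Longrightarrow> u < b \<Longrightarrow> (\<integral>\<^sup>+\<omega>. ennreal ((f \<omega> u)\<^sup>2) \<partial>M) \<le> ennreal ((g u)\<^sup>2)"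
  shows "AE \<omega> in M. set_integrable lborel {a<..<b} (f \<omega>)"
    and "(\<lambda>\<omega>. LBINT u=a..b. f \<omega> u) \<in> borel_measurable M"
    and "(\<integral>\<^sup>+\<omega>. ennreal ((LBINT u=a..b. f \<omega> u)\<^sup>2) \<partial>M) \<le> ennreal (G\<^sup>2)"
proof -
  define S where "S = {a<..<b}"
  have [measurable]: "S \<in> sets borel" "(\<lambda>\<omega>. f \<omega> u) \<in> borel_measurable M" for u
    using measurable_Pair1[OF meas, of u] by (simp_all add: S_def)
  have gpos': "\<And>u. u \<in> S \<Longrightarrow> 0 < g u" and mom': "\<And>u. u \<in> S \<Longrightarrow> (\<integral>\<^sup>+\<omega>. ennreal ((f \<omega> u)\<^sup>2) \<partial>M) \<le> ennreal ((g u)\<^sup>2)"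
    using gpos mom by (auto simp: S_def)
  have interval_eq: "(LBINT u=a..b. f \<omega> u) = set_lebesgue_integral lborel S (f \<omega>)" for \<omega>
    using ab by (simp add: interval_lebesgue_integral_def S_def)
  show AE_int: "AE \<omega> in M. set_integrable lborel {a<..<b} (f \<omega>)"
    by (rule AE_set_integrable_of_moment_bound[OF meas _ _ _ _ mom])
       (use gpos gint in \<open>auto simp: less_imp_le top.not_eq_extremum ennreal_less_top intro: le_less_trans\<close>)
  show "(\<lambda>\<omega>. LBINT u=a..b. f \<omega> u) \<in> borel_measurable M"
    unfolding interval_eq set_lebesgue_integral_def by measurable
  define Gi where "Gi = (\<integral>\<^sup>+u. ennreal (g u) * indicator S u \<partial>lborel)"
  define J where "J \<omega> = (\<integral>\<^sup>+u. ennreal ((f \<omega> u)\<^sup>2 / g u) * indicator S u \<partial>lborel)" for \<omega>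
  have "(\<integral>\<^sup>+\<omega>. ennreal ((LBINT u=a..b. f \<omega> u)\<^sup>2) \<partial>M) \<le> (\<integral>\<^sup>+\<omega>. Gi * J \<omega> \<partial>M)"
  proof (rule nn_integral_mono_AE)
    show "AE \<omega> in M. ennreal ((LBINT u=a..b. f \<omega> u)\<^sup>2) \<le> Gi * J \<omega>"
      using AE_int AE_space
    proof eventually_elim
      case (elim \<omega>)
      have [measurable]: "f \<omega> \<in> borel_measurable borel"
        using measurable_Pair2[OF meas elim(2)] by simp
      show ?case unfolding interval_eq Gi_def J_def
        by (rule set_integral_square_le_weighted) (use elim gpos' in \<open>auto simp: S_def\<close>)
    qed
  qed
  also have "\<dots> = Gi * (\<integral>\<^sup>+\<omega>. J \<omega> \<partial>M)"
    unfolding J_def by (rule nn_integral_cmult) measurable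
  also have "\<dots> \<le> Gi * Gi"
    unfolding J_def Gi_def by (intro mult_left_mono expected_weighted_square_integral_le gpos' mom') auto
  also have "Gi * Gi \<le> ennreal G * ennreal G"
    using gint unfolding Gi_def S_def by (intro mult_mono) auto
  finally show "(\<integral>\<^sup>+\<omega>. ennreal ((LBINT u=a..b. f \<omega> u)\<^sup>2) \<partial>M) \<le> ennreal (G\<^sup>2)"
    using G0 by (simp add: ennreal_mult[symmetric] power2_eq_square)
qed

definition X_moment_const :: "real \<Rightarrow> real \<Rightarrow> real" where
  "X_moment_const H \<alpha> = 2 + 2 / (H + \<alpha> - 1)\<^sup>2"

definition X_shift_const :: "real \<Rightarrow> real \<Rightarrow> real" where
  "X_shift_const H \<alpha> = 1 + 1 / (H + \<alpha> - 1) + 1 / (1 - \<alpha>) + 2 / (1 - (H + \<alpha> - 1))"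

definition X_holder_const :: "real \<Rightarrow> real \<Rightarrow> real" where
  "X_holder_const H \<alpha> = 100 * X_moment_const H \<alpha> + 20 + 92 * (X_shift_const H \<alpha>)\<^sup>2"

section \<open>Fractional Brownian motion and the functional X\<close>

locale fbm_functional =
  fixes M :: "'a measure" and H \<alpha> :: real and B :: "real \<Rightarrow> 'a \<Rightarrow> real"
  assumes fbm: "fbm M H B" and H0: "0 < H" and H1: "H < 1" and \<alpha>0: "1 - H < \<alpha>" and \<alpha>1: "\<alpha> < 1"
begin

sublocale prob_space M using fbm by (simp add: fbm_def)

lemma B_measurable[measurable]: "B t \<in> borel_measurable M"
  using fbm by (simp add: fbm_def)

lemma B_continuous: "\<omega> \<in> space M \<Longrightarrow> continuous_on {0..} (\<lambda>t. B t \<omega>)"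
  using fbm by (simp add: fbm_def)

lemma B_covariance:
  "0 \<le> s \<Longrightarrow> 0 \<le> t \<Longrightarrow> expectation (\<lambda>\<omega>. B t \<omega> * B s \<omega>) = (t powr (2*H) + s powr (2*H) - \<bar>t - s\<bar> powr (2*H)) / 2"
  using fbm by (simp add: fbm_def)

lemma gamma_pos: "0 < H + \<alpha> - 1" and gamma_less_one: "H + \<alpha> - 1 < 1"
  using \<alpha>0 \<alpha>1 H1 by simp_all

lemma B_square_integrable:
  assumes "0 \<le> t" shows "integrable M (\<lambda>\<omega>. (B t \<omega>)\<^sup>2)"
proof -
  have "\<forall>I c. finite I \<and> I \<subseteq> {0..} \<longrightarrow> centered_gaussian_rv M (\<lambda>\<omega>. \<Sum>t\<in>I. c t * B t \<omega>)"
    using fbm unfolding fbm_def by (elim conjE)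
  from spec[OF spec[OF this, of "{t}"], of "\<lambda>_. 1"] assms
  have "centered_gaussian_rv M (\<lambda>\<omega>. \<Sum>s\<in>{t}. 1 * B s \<omega>)"
    by simp
  then consider "AE \<omega> in M. B t \<omega> = 0" | \<sigma> where "0 < \<sigma>" "distributed M lborel (B t) (normal_density 0 \<sigma>)"
    unfolding centered_gaussian_rv_def by auto
  then show ?thesis
  proof cases
    case 1
    then have zero: "AE \<omega> in M. 0 = (B t \<omega>)\<^sup>2" by eventually_elim simp
    show ?thesis by (rule integrable_cong_AE_imp[OF integrable_zero _ zero]) measurable
  next
    case (2 \<sigma>)
    have "integrable lborel (\<lambda>x. normal_density 0 \<sigma> x * x\<^sup>2)"
      using integrable_normal_moment[where \<mu>=0 and \<sigma>=\<sigma> and k=2] 2(1) by simp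
    then show ?thesis
      using distributed_integrable[OF 2(2), of "\<lambda>x. x\<^sup>2"] by simp
  qed
qed

lemma B_product_integrable:
  assumes "0 \<le> s" "0 \<le> t" shows "integrable M (\<lambda>\<omega>. B t \<omega> * B s \<omega>)"
proof (rule Bochner_Integration.integrable_bound)
  show "integrable M (\<lambda>\<omega>. (B t \<omega>)\<^sup>2 + (B s \<omega>)\<^sup>2)"
    using B_square_integrable assms by auto
  have "\<bar>x * y\<bar> \<le> x\<^sup>2 + y\<^sup>2" for x y :: real
  proof -
    have "2 * (\<bar>x\<bar> * \<bar>y\<bar>) \<le> x\<^sup>2 + y\<^sup>2" using sum_squares_bound[of "\<bar>x\<bar>" "\<bar>y\<bar>"] by simp
    moreover have "0 \<le> \<bar>x\<bar> * \<bar>y\<bar>" by simp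
    ultimately show ?thesis unfolding abs_mult by linarith
  qed
  then show "AE \<omega> in M. norm (B t \<omega> * B s \<omega>) \<le> norm ((B t \<omega>)\<^sup>2 + (B s \<omega>)\<^sup>2)"
    by simp
qed measurable

lemma increment_moment:
  assumes "0 \<le> a" "0 \<le> b"
  shows "(\<integral>\<^sup>+\<omega>. ennreal ((c * (B a \<omega> - B b \<omega>))\<^sup>2) \<partial>M) = ennreal (c\<^sup>2 * \<bar>a - b\<bar> powr (2*H))"
proof -
  have expand: "(c * (B a \<omega> - B b \<omega>))\<^sup>2
      = c\<^sup>2 * (B a \<omega> * B a \<omega>) - 2 * c\<^sup>2 * (B a \<omega> * B b \<omega>) + c\<^sup>2 * (B b \<omega> * B b \<omega>)" for \<omega>
    by (simp add: algebra_simps power2_eq_square)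
  have ints: "integrable M (\<lambda>\<omega>. B a \<omega> * B a \<omega>)" "integrable M (\<lambda>\<omega>. B a \<omega> * B b \<omega>)"
    "integrable M (\<lambda>\<omega>. B b \<omega> * B b \<omega>)"
    using B_product_integrable assms by auto
  have "(\<integral>\<omega>. (c * (B a \<omega> - B b \<omega>))\<^sup>2 \<partial>M) = c\<^sup>2 * expectation (\<lambda>\<omega>. B a \<omega> * B a \<omega>)
      - 2 * c\<^sup>2 * expectation (\<lambda>\<omega>. B a \<omega> * B b \<omega>) + c\<^sup>2 * expectation (\<lambda>\<omega>. B b \<omega> * B b \<omega>)"
    unfolding expand using ints by simp
  also have "\<dots> = c\<^sup>2 * \<bar>a - b\<bar> powr (2*H)"
    using assms by (simp add: B_covariance field_simps)
  finally have "(\<integral>\<omega>. (c * (B a \<omega> - B b \<omega>))\<^sup>2 \<partial>M) = c\<^sup>2 * \<bar>a - b\<bar> powr (2*H)" .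
  moreover have "integrable M (\<lambda>\<omega>. (c * (B a \<omega> - B b \<omega>))\<^sup>2)"
    unfolding expand using ints by auto
  ultimately show ?thesis
    by (simp add: nn_integral_eq_integral)
qed

text \<open>Continuity of the paths makes \<open>(\<omega>, u) \<mapsto> B (max 0 u) \<omega>\<close> jointly measurable, which
  Tonelli's theorem requires; \<open>max 0 u\<close> extends the process to negative times.\<close>
lemma B_pos_part_measurable[measurable]:
  "(\<lambda>x. B (max 0 (snd x)) (fst x)) \<in> borel_measurable (M \<Otimes>\<^sub>M lborel)"
proof (rule borel_measurable_LIMSEQ_real)
  define q where "q n u = max 0 (real_of_int \<lceil>real (Suc n) * u\<rceil> / real (Suc n))" for n u
  fix x :: "'a \<times> real" assume "x \<in> space (M \<Otimes>\<^sub>M lborel)"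
  then have "fst x \<in> space M" by (auto simp: space_pair_measure)
  moreover have "(\<lambda>n. q n (snd x)) \<longlonglongrightarrow> max 0 (snd x)"
    unfolding q_def by (intro tendsto_max tendsto_const ceiling_grid_tendsto)
  ultimately show "(\<lambda>n. B (q n (snd x)) (fst x)) \<longlonglongrightarrow> B (max 0 (snd x)) (fst x)"
    by (intro continuous_on_tendsto_compose[OF B_continuous]) (auto simp: q_def)
next
  fix n
  have "(\<lambda>x. (\<lambda>k::int. \<lambda>x. B (max 0 (real_of_int k / real (Suc n))) (fst x)) \<lceil>real (Suc n) * snd x\<rceil> x)
      \<in> borel_measurable (M \<Otimes>\<^sub>M lborel)"
    by (rule measurable_compose_countable) measurable
  then show "(\<lambda>x. B (max 0 (real_of_int \<lceil>real (Suc n) * snd x\<rceil> / real (Suc n))) (fst x))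
      \<in> borel_measurable (M \<Otimes>\<^sub>M lborel)"
    by simp
qed

text \<open>The second moment \<open>E Y\<^sup>2\<close> as an extended real; it need not be finite a priori.\<close>
definition msq :: "('a \<Rightarrow> real) \<Rightarrow> ennreal" where
  "msq Y = (\<integral>\<^sup>+\<omega>. ennreal ((Y \<omega>)\<^sup>2) \<partial>M)"

lemma msq_add_bound:
  assumes [measurable]: "Y \<in> borel_measurable M" "Z \<in> borel_measurable M"
    and "msq Y \<le> ennreal p" "msq Z \<le> ennreal q" "0 \<le> p" "0 \<le> q"
  shows "msq (\<lambda>\<omega>. Y \<omega> + Z \<omega>) \<le> ennreal (2 * p + 2 * q)"
proof -
  have "msq (\<lambda>\<omega>. Y \<omega> + Z \<omega>) \<le> (\<integral>\<^sup>+\<omega>. 2 * ennreal ((Y \<omega>)\<^sup>2) + 2 * ennreal ((Z \<omega>)\<^sup>2) \<partial>M)"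
    unfolding msq_def
  proof (intro nn_integral_mono)
    fix \<omega>
    have "(Y \<omega> + Z \<omega>)\<^sup>2 \<le> 2 * (Y \<omega>)\<^sup>2 + 2 * (Z \<omega>)\<^sup>2"
      using sum_squares_bound[of "Y \<omega>" "Z \<omega>"] by (simp add: power2_sum)
    then have "ennreal ((Y \<omega> + Z \<omega>)\<^sup>2) \<le> ennreal (2 * (Y \<omega>)\<^sup>2 + 2 * (Z \<omega>)\<^sup>2)"
      by (rule ennreal_leI)
    also have "\<dots> = 2 * ennreal ((Y \<omega>)\<^sup>2) + 2 * ennreal ((Z \<omega>)\<^sup>2)"
      by (subst ennreal_plus) (auto simp: ennreal_mult)
    finally show "ennreal ((Y \<omega> + Z \<omega>)\<^sup>2) \<le> 2 * ennreal ((Y \<omega>)\<^sup>2) + 2 * ennreal ((Z \<omega>)\<^sup>2)" .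
  qed
  also have "\<dots> = 2 * msq Y + 2 * msq Z"
    unfolding msq_def by (simp add: nn_integral_add nn_integral_cmult)
  also have "\<dots> \<le> 2 * ennreal p + 2 * ennreal q"
    using assms by (intro add_mono mult_left_mono) auto
  also have "\<dots> = ennreal (2 * p + 2 * q)"
    using assms by (simp add: ennreal_plus ennreal_mult)
  finally show ?thesis .
qed

lemma msq_cong_AE: "AE \<omega> in M. Y \<omega> = Z \<omega> \<Longrightarrow> msq Y = msq Z"
  unfolding msq_def by (intro nn_integral_cong_AE) auto

lemma msq_minus_commute: "msq (\<lambda>\<omega>. Y \<omega> - Z \<omega>) = msq (\<lambda>\<omega>. Z \<omega> - Y \<omega>)"
  unfolding msq_def by (simp add: power2_commute)

lemma msq_increment_bound:
  assumes "0 \<le> p" "0 \<le> q" "\<bar>k\<bar> * \<bar>p - q\<bar> powr H \<le> R"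
  shows "msq (\<lambda>\<omega>. k * (B p \<omega> - B q \<omega>)) \<le> ennreal (R\<^sup>2)"
proof -
  have "msq (\<lambda>\<omega>. k * (B p \<omega> - B q \<omega>)) = ennreal ((\<bar>k\<bar> * \<bar>p - q\<bar> powr H)\<^sup>2)"
    unfolding msq_def increment_moment[OF assms(1,2)]
    by (simp add: power_mult_distrib square_powr)
  also have "\<dots> \<le> ennreal (R\<^sup>2)"
    using assms by (intro ennreal_leI power_mono) auto
  finally show ?thesis .
qed

text \<open>Outside
  \<open>[0,\<infinity>)\<close> the process is read at \<open>max 0 \<phi>\<close>, which keeps the integrand jointly measurable.\<close>
lemma increment_integral_bound:
  fixes \<phi> w g :: "real \<Rightarrow> real" and r a b G :: real
  assumes r: "0 \<le> r" and ab: "a < b" and G0: "0 \<le> G"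
    and [measurable]: "\<phi> \<in> borel_measurable borel" "w \<in> borel_measurable borel"
      "g \<in> borel_measurable borel"
    and \<phi>0: "\<And>u. a < u \<Longrightarrow> u < b \<Longrightarrow> 0 \<le> \<phi> u"
    and gpos: "\<And>u. a < u \<Longrightarrow> u < b \<Longrightarrow> 0 < g u"
    and gbd: "\<And>u. a < u \<Longrightarrow> u < b \<Longrightarrow> \<bar>w u\<bar> * \<bar>\<phi> u - r\<bar> powr H \<le> g u"
    and gint: "(\<integral>\<^sup>+u. ennreal (g u) * indicator {a<..<b} u \<partial>lborel) \<le> ennreal G"
  shows "AE \<omega> in M. set_integrable lborel {a<..<b} (\<lambda>u. (B (max 0 (\<phi> u)) \<omega> - B r \<omega>) * w u)"
    and "(\<lambda>\<omega>. LBINT u=a..b. (B (max 0 (\<phi> u)) \<omega> - B r \<omega>) * w u) \<in> borel_measurable M"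
    and "msq (\<lambda>\<omega>. LBINT u=a..b. (B (max 0 (\<phi> u)) \<omega> - B r \<omega>) * w u) \<le> ennreal (G\<^sup>2)"
proof -
  have "(\<lambda>x. (fst x, \<phi> (snd x))) \<in> measurable (M \<Otimes>\<^sub>M lborel) (M \<Otimes>\<^sub>M lborel)"
    by measurable
  from measurable_compose[OF this B_pos_part_measurable]
  have [measurable]: "(\<lambda>x. B (max 0 (\<phi> (snd x))) (fst x)) \<in> borel_measurable (M \<Otimes>\<^sub>M lborel)"
    by simp
  have mom: "(\<integral>\<^sup>+\<omega>. ennreal (((B (max 0 (\<phi> u)) \<omega> - B r \<omega>) * w u)\<^sup>2) \<partial>M) \<le> ennreal ((g u)\<^sup>2)"
    if u: "a < u" "u < b" for u
  proof -
    have "(\<integral>\<^sup>+\<omega>. ennreal (((B (max 0 (\<phi> u)) \<omega> - B r \<omega>) * w u)\<^sup>2) \<partial>M)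
        = msq (\<lambda>\<omega>. w u * (B (\<phi> u) \<omega> - B r \<omega>))"
      using \<phi>0[OF u] by (simp add: msq_def max_def mult.commute)
    also have "\<dots> \<le> ennreal ((g u)\<^sup>2)"
      using \<phi>0[OF u] r gbd[OF u] by (rule msq_increment_bound)
    finally show ?thesis .
  qed
  note bound = interval_integral_moment_bound[OF _ _ ab G0 gpos gint mom]
  show "AE \<omega> in M. set_integrable lborel {a<..<b} (\<lambda>u. (B (max 0 (\<phi> u)) \<omega> - B r \<omega>) * w u)"
    "(\<lambda>\<omega>. LBINT u=a..b. (B (max 0 (\<phi> u)) \<omega> - B r \<omega>) * w u) \<in> borel_measurable M"
    "msq (\<lambda>\<omega>. LBINT u=a..b. (B (max 0 (\<phi> u)) \<omega> - B r \<omega>) * w u) \<le> ennreal (G\<^sup>2)"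
    using bound by (simp_all add: msq_def)
qed

definition Xkernel :: "real \<Rightarrow> 'a \<Rightarrow> real \<Rightarrow> real" where
  "Xkernel c \<omega> u = (B (max 0 u) \<omega> - B c \<omega>) * (u - c) powr (\<alpha> - 2)"

text \<open>The functional written with the kernel; on \<open>(c,b)\<close> the truncation \<open>max 0 u\<close> is void.\<close>
lemma X_eq:
  assumes "0 \<le> c" "c < b"
  shows "fbm_X \<alpha> B b c \<omega> = (b - c) powr (\<alpha> - 1) * (B b \<omega> - B c \<omega>) + (LBINT u=c..b. Xkernel c \<omega> u)"
proof -
  have "(B b \<omega> - B c \<omega>) / (b - c) powr (1 - \<alpha>) = (b - c) powr (\<alpha> - 1) * (B b \<omega> - B c \<omega>)"
    using assms by (simp add: powr_diff powr_minus_divide divide_simps)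
  moreover have "(LBINT u=c..b. (B u \<omega> - B c \<omega>) / (u - c) powr (2 - \<alpha>)) = (LBINT u=c..b. Xkernel c \<omega> u)"
  proof (rule interval_integral_cong)
    fix u assume "u \<in> einterval (min (ereal c) (ereal b)) (max (ereal c) (ereal b))"
    then have u: "c < u" "u < b" using assms by (auto simp: einterval_def min_def max_def split: if_splits)
    then show "(B u \<omega> - B c \<omega>) / (u - c) powr (2 - \<alpha>) = Xkernel c \<omega> u"
      using assms by (simp add: Xkernel_def powr_minus_divide[symmetric] powr_diff)
  qed
  ultimately show ?thesis unfolding fbm_X_def by simp
qed

lemma Xkernel_integral_bound:
  assumes "0 \<le> c" "c \<le> a" "a < b" "0 \<le> G"
    and [measurable]: "g \<in> borel_measurable borel"
    and gbd: "\<And>u. a < u \<Longrightarrow> u < b \<Longrightarrow> (u - c) powr (H + \<alpha> - 2) \<le> g u"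
    and gint: "(\<integral>\<^sup>+u. ennreal (g u) * indicator {a<..<b} u \<partial>lborel) \<le> ennreal G"
  shows "AE \<omega> in M. set_integrable lborel {a<..<b} (Xkernel c \<omega>)"
    and "(\<lambda>\<omega>. LBINT u=a..b. Xkernel c \<omega> u) \<in> borel_measurable M"
    and "msq (\<lambda>\<omega>. LBINT u=a..b. Xkernel c \<omega> u) \<le> ennreal (G\<^sup>2)"
proof -
  have weight: "\<bar>(u - c) powr (\<alpha> - 2)\<bar> * \<bar>u - c\<bar> powr H \<le> g u" if "a < u" "u < b" for u
  proof -
    have "\<bar>(u - c) powr (\<alpha> - 2)\<bar> * \<bar>u - c\<bar> powr H = (u - c) powr (H + \<alpha> - 2)"
      using that assms by (simp add: powr_add[symmetric] algebra_simps)
    then show ?thesis using gbd[OF that] by simp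
  qed
  have gpos: "0 < g u" if "a < u" "u < b" for u
  proof -
    have "0 < (u - c) powr (H + \<alpha> - 2)" using that assms by simp
    then show ?thesis using gbd[OF that] by linarith
  qed
  have nonneg: "0 \<le> u" if "a < u" for u
    using that assms by simp
  note bound = increment_integral_bound[where \<phi>="\<lambda>u. u" and w="\<lambda>u. (u - c) powr (\<alpha> - 2)",
      OF \<open>0 \<le> c\<close> \<open>a < b\<close> \<open>0 \<le> G\<close> _ _ \<open>g \<in> borel_measurable borel\<close> nonneg gpos weight gint]
  show "AE \<omega> in M. set_integrable lborel {a<..<b} (Xkernel c \<omega>)"
    "(\<lambda>\<omega>. LBINT u=a..b. Xkernel c \<omega> u) \<in> borel_measurable M"
    "msq (\<lambda>\<omega>. LBINT u=a..b. Xkernel c \<omega> u) \<le> ennreal (G\<^sup>2)"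
    unfolding Xkernel_def[abs_def] by (rule bound; measurable)+
qed

text \<open>The full integral term of \<open>X(b,c)\<close>: \<open>\<integral>_c^b (u - c)^(\<gamma>-1) du = (b - c)^\<gamma>/\<gamma>\<close>.\<close>
lemma Xkernel_integral:
  assumes "0 \<le> c" "c < b"
  shows "AE \<omega> in M. set_integrable lborel {c<..<b} (Xkernel c \<omega>)"
    and "(\<lambda>\<omega>. LBINT u=c..b. Xkernel c \<omega> u) \<in> borel_measurable M"
    and "msq (\<lambda>\<omega>. LBINT u=c..b. Xkernel c \<omega> u) \<le> ennreal (((b - c) powr (H + \<alpha> - 1) / (H + \<alpha> - 1))\<^sup>2)"
proof -
  have "(\<integral>\<^sup>+u. ennreal ((u - c) powr (H + \<alpha> - 2)) * indicator {c<..<b} u \<partial>lborel)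
      \<le> ennreal ((b - c) powr (H + \<alpha> - 1) / (H + \<alpha> - 1))"
    using nn_integral_powr_left_end[OF gamma_pos \<open>c < b\<close>] by simp
  note bound = Xkernel_integral_bound[OF assms(1) order_refl assms(2) _ _ _ this]
  show "AE \<omega> in M. set_integrable lborel {c<..<b} (Xkernel c \<omega>)"
    "(\<lambda>\<omega>. LBINT u=c..b. Xkernel c \<omega> u) \<in> borel_measurable M"
    "msq (\<lambda>\<omega>. LBINT u=c..b. Xkernel c \<omega> u) \<le> ennreal (((b - c) powr (H + \<alpha> - 1) / (H + \<alpha> - 1))\<^sup>2)"
    by (rule bound; use gamma_pos in simp)+
qed

lemma X_measurable: assumes "0 \<le> c" "c < b" shows "fbm_X \<alpha> B b c \<in> borel_measurable M"
  using Xkernel_integral(2)[OF assms] by (subst X_eq[OF assms, abs_def]) measurable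

lemma X_moment:
  assumes "0 \<le> c" "c < b"
  shows "msq (fbm_X \<alpha> B b c) \<le> ennreal (X_moment_const H \<alpha> * (b - c) powr (2 * (H + \<alpha> - 1)))"
proof -
  let ?\<gamma> = "H + \<alpha> - 1" and ?L = "(b - c) powr (2 * (H + \<alpha> - 1))"
  have "msq (\<lambda>\<omega>. (b - c) powr (\<alpha> - 1) * (B b \<omega> - B c \<omega>)) \<le> ennreal (((b - c) powr ?\<gamma>)\<^sup>2)"
    using assms by (intro msq_increment_bound) (auto simp: powr_add[symmetric] algebra_simps)
  from msq_add_bound[OF _ Xkernel_integral(2)[OF assms] this Xkernel_integral(3)[OF assms]]
  have "msq (fbm_X \<alpha> B b c) \<le> ennreal (2 * ((b - c) powr ?\<gamma>)\<^sup>2 + 2 * ((b - c) powr ?\<gamma> / ?\<gamma>)\<^sup>2)"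
    using X_eq[OF assms] by (simp add: msq_def)
  also have "2 * ((b - c) powr ?\<gamma>)\<^sup>2 + 2 * ((b - c) powr ?\<gamma> / ?\<gamma>)\<^sup>2 = X_moment_const H \<alpha> * ?L"
    using assms by (simp add: X_moment_const_def power_divide square_powr algebra_simps)
  finally show ?thesis .
qed

subsection \<open>Moving the right end point\<close>

lemma X_right_shift_eq:
  assumes "0 \<le> c" "c < a" "a < b"
  shows "AE \<omega> in M. fbm_X \<alpha> B b c \<omega> - fbm_X \<alpha> B a c \<omega>
    = (b - c) powr (\<alpha> - 1) * (B b \<omega> - B a \<omega>)
      + ((b - c) powr (\<alpha> - 1) - (a - c) powr (\<alpha> - 1)) * (B a \<omega> - B c \<omega>)
      + (LBINT u=a..b. Xkernel c \<omega> u)"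
proof -
  have "c < b" using assms by simp
  from Xkernel_integral(1)[OF assms(1) this] show ?thesis
  proof eventually_elim
    case (elim \<omega>)
    have "(LBINT u=c..a. Xkernel c \<omega> u) + (LBINT u=a..b. Xkernel c \<omega> u) = (LBINT u=c..b. Xkernel c \<omega> u)"
      by (rule interval_integral_sum)
         (use elim assms in \<open>simp add: interval_lebesgue_integrable_def min_def max_def\<close>)
    then show ?case
      using X_eq[of c b \<omega>] X_eq[of c a \<omega>] assms by (simp add: algebra_simps)
  qed
qed

text \<open>If the right end point moves by at most \<open>D \<le> a - c\<close>, \<open>X\<close> changes by \<open>O(D^\<gamma>)\<close>;
  each of the three terms has standard deviation at most \<open>D^\<gamma>\<close>.\<close>
lemma X_right_shift_bound:
  assumes c: "0 \<le> c" "c < a" "a \<le> b" and D: "b - a \<le> D" "D \<le> a - c" "0 < D"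
  shows "msq (\<lambda>\<omega>. fbm_X \<alpha> B b c \<omega> - fbm_X \<alpha> B a c \<omega>) \<le> ennreal (10 * D powr (2 * (H + \<alpha> - 1)))"
proof (cases "a = b")
  case True then show ?thesis by (simp add: msq_def)
next
  case False
  with c have ab: "a < b" by simp
  define R where "R = D powr (H + \<alpha> - 1)"
  have R_eq: "D powr (H + \<alpha> - 2) * D = R"
    using powr_minus_one_mult[OF \<open>0 < D\<close>, of "H + \<alpha> - 1"] by (simp add: R_def)
  have short: "msq (\<lambda>\<omega>. (b - c) powr (\<alpha> - 1) * (B b \<omega> - B a \<omega>)) \<le> ennreal (R\<^sup>2)"
    unfolding R_def using c D \<alpha>1 H0 by (intro msq_increment_bound short_increment_weight_le) auto
  have long: "msq (\<lambda>\<omega>. ((b - c) powr (\<alpha> - 1) - (a - c) powr (\<alpha> - 1)) * (B a \<omega> - B c \<omega>)) \<le> ennreal (R\<^sup>2)"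
    unfolding R_def using c D \<alpha>0 \<alpha>1 H0 H1 by (intro msq_increment_bound long_increment_weight_le) auto
  have "(\<integral>\<^sup>+u. ennreal ((a - c) powr (H + \<alpha> - 2)) * indicator {a<..<b} u \<partial>lborel)
      = ennreal ((a - c) powr (H + \<alpha> - 2) * (b - a))"
    using ab by (simp add: nn_integral_cmult_indicator ennreal_mult)
  also have "(a - c) powr (H + \<alpha> - 2) * (b - a) \<le> D powr (H + \<alpha> - 2) * D"
    using c D ab H1 \<alpha>1 by (intro mult_mono powr_mono2') auto
  finally have gint: "(\<integral>\<^sup>+u. ennreal ((a - c) powr (H + \<alpha> - 2)) * indicator {a<..<b} u \<partial>lborel) \<le> ennreal R"
    unfolding R_eq by (simp add: ennreal_leI)
  have gbd: "(u - c) powr (H + \<alpha> - 2) \<le> (a - c) powr (H + \<alpha> - 2)" if "a < u" "u < b" for u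
    using that c H1 \<alpha>1 by (intro powr_mono2') auto
  have "0 \<le> R" by (simp add: R_def)
  note kernel = Xkernel_integral_bound(2,3)[OF c(1) less_imp_le[OF c(2)] ab this borel_measurable_const gbd gint]
  have kernel_bound: "msq (\<lambda>\<omega>. LBINT u=a..b. Xkernel c \<omega> u) \<le> ennreal (R\<^sup>2)"
    and [measurable]: "(\<lambda>\<omega>. LBINT u=a..b. Xkernel c \<omega> u) \<in> borel_measurable M"
    using kernel by auto
  have "msq (\<lambda>\<omega>. fbm_X \<alpha> B b c \<omega> - fbm_X \<alpha> B a c \<omega>)
      = msq (\<lambda>\<omega>. (b - c) powr (\<alpha> - 1) * (B b \<omega> - B a \<omega>)
      + ((b - c) powr (\<alpha> - 1) - (a - c) powr (\<alpha> - 1)) * (B a \<omega> - B c \<omega>)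
      + (LBINT u=a..b. Xkernel c \<omega> u))"
    using X_right_shift_eq[OF c(1,2) ab] by (rule msq_cong_AE)
  also have "\<dots> \<le> ennreal (2 * (2 * R\<^sup>2 + 2 * R\<^sup>2) + 2 * R\<^sup>2)"
    by (intro msq_add_bound short long kernel_bound) auto
  also have "2 * (2 * R\<^sup>2 + 2 * R\<^sup>2) + 2 * R\<^sup>2 = 10 * D powr (2 * (H + \<alpha> - 1))"
    using D by (simp add: R_def square_powr)
  finally show ?thesis .
qed

subsection \<open>Moving the left end point\<close>

lemma shift_const_ge:
  "1 \<le> X_shift_const H \<alpha>" "1 / (H + \<alpha> - 1) \<le> X_shift_const H \<alpha>" "1 / (1 - \<alpha>) \<le> X_shift_const H \<alpha>"
  "1 / (H + \<alpha> - 1) + 2 / (1 - (H + \<alpha> - 1)) \<le> X_shift_const H \<alpha>"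
proof -
  have "0 < 1 / (H + \<alpha> - 1)" "0 < 1 / (1 - \<alpha>)" "0 < 2 / (1 - (H + \<alpha> - 1))"
    using \<alpha>0 \<alpha>1 H1 by auto
  then show "1 \<le> X_shift_const H \<alpha>" "1 / (H + \<alpha> - 1) \<le> X_shift_const H \<alpha>"
    "1 / (1 - \<alpha>) \<le> X_shift_const H \<alpha>" "1 / (H + \<alpha> - 1) + 2 / (1 - (H + \<alpha> - 1)) \<le> X_shift_const H \<alpha>"
    unfolding X_shift_const_def by linarith+
qed

text \<open>The increment \<open>B d - B c\<close> frozen in the kernel of \<open>X(b,c)\<close> on \<open>(d,b)\<close>:
  \<open>(d - c)^H \<integral>_d^\<infinity> (u - c)^(\<alpha>-2) du = (d - c)^\<gamma> / (1 - \<alpha>)\<close>.\<close>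
lemma frozen_increment_integral_bound:
  assumes c: "0 \<le> c" "c < d" "d < b" and D: "d - c \<le> D"
  shows "AE \<omega> in M. set_integrable lborel {d<..<b} (\<lambda>u. (B d \<omega> - B c \<omega>) * (u - c) powr (\<alpha> - 2))"
    and "(\<lambda>\<omega>. LBINT u=d..b. (B d \<omega> - B c \<omega>) * (u - c) powr (\<alpha> - 2)) \<in> borel_measurable M"
    and "msq (\<lambda>\<omega>. LBINT u=d..b. (B d \<omega> - B c \<omega>) * (u - c) powr (\<alpha> - 2))
      \<le> ennreal ((X_shift_const H \<alpha> * D powr (H + \<alpha> - 1))\<^sup>2)"
proof -
  define \<delta> where "\<delta> = d - c"
  have \<delta>: "0 < \<delta>" using c by (simp add: \<delta>_def)
  have "(\<integral>\<^sup>+u. ennreal ((d - c) powr H * (u - c) powr (\<alpha> - 2)) * indicator {d<..<b} u \<partial>lborel)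
      \<le> (\<integral>\<^sup>+u. ennreal ((d - c) powr H) * (ennreal ((u - c) powr (\<alpha> - 2)) * indicator {c + \<delta>..<b} u) \<partial>lborel)"
    by (intro nn_integral_mono) (auto simp: ennreal_mult \<delta>_def split: split_indicator)
  also have "\<dots> = ennreal ((d - c) powr H) * (\<integral>\<^sup>+u. ennreal ((u - c) powr (\<alpha> - 2)) * indicator {c + \<delta>..<b} u \<partial>lborel)"
    by (rule nn_integral_cmult) measurable
  also have "\<dots> \<le> ennreal ((d - c) powr H) * ennreal (\<delta> powr (\<alpha> - 1) / (1 - \<alpha>))"
    by (intro mult_left_mono nn_integral_powr_tail) (use \<alpha>1 \<delta> in auto)
  also have "\<dots> = ennreal (1 / (1 - \<alpha>) * \<delta> powr (H + \<alpha> - 1))"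
    using \<alpha>1 by (simp add: \<delta>_def ennreal_mult[symmetric] powr_add[symmetric] algebra_simps)
  also have "1 / (1 - \<alpha>) * \<delta> powr (H + \<alpha> - 1) \<le> X_shift_const H \<alpha> * D powr (H + \<alpha> - 1)"
    using shift_const_ge \<delta> D gamma_pos by (intro mult_mono powr_mono2) (auto simp: \<delta>_def)
  finally have gint: "(\<integral>\<^sup>+u. ennreal ((d - c) powr H * (u - c) powr (\<alpha> - 2)) * indicator {d<..<b} u \<partial>lborel)
      \<le> ennreal (X_shift_const H \<alpha> * D powr (H + \<alpha> - 1))"
    by (simp add: ennreal_leI)
  have "0 \<le> X_shift_const H \<alpha> * D powr (H + \<alpha> - 1)"
    using shift_const_ge by simp
  note bound = increment_integral_bound[where \<phi>="\<lambda>u. d" and w="\<lambda>u. (u - c) powr (\<alpha> - 2)"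
      and g="\<lambda>u. (d - c) powr H * (u - c) powr (\<alpha> - 2)", OF c(1) c(3) this _ _ _ _ _ _ gint]
  show "AE \<omega> in M. set_integrable lborel {d<..<b} (\<lambda>u. (B d \<omega> - B c \<omega>) * (u - c) powr (\<alpha> - 2))"
    "(\<lambda>\<omega>. LBINT u=d..b. (B d \<omega> - B c \<omega>) * (u - c) powr (\<alpha> - 2)) \<in> borel_measurable M"
    "msq (\<lambda>\<omega>. LBINT u=d..b. (B d \<omega> - B c \<omega>) * (u - c) powr (\<alpha> - 2))
      \<le> ennreal ((X_shift_const H \<alpha> * D powr (H + \<alpha> - 1))\<^sup>2)"
    using bound c by (simp_all add: max_def)
qed

lemma kernel_difference_integral_bound:
  assumes c: "0 \<le> c" "c < d" "d < b" and D: "d - c \<le> D"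
  shows "AE \<omega> in M. set_integrable lborel {d<..<b}
      (\<lambda>u. (B (max 0 u) \<omega> - B d \<omega>) * ((u - c) powr (\<alpha> - 2) - (u - d) powr (\<alpha> - 2)))"
    and "(\<lambda>\<omega>. LBINT u=d..b. (B (max 0 u) \<omega> - B d \<omega>) * ((u - c) powr (\<alpha> - 2) - (u - d) powr (\<alpha> - 2)))
      \<in> borel_measurable M"
    and "msq (\<lambda>\<omega>. LBINT u=d..b. (B (max 0 u) \<omega> - B d \<omega>) * ((u - c) powr (\<alpha> - 2) - (u - d) powr (\<alpha> - 2)))
      \<le> ennreal ((X_shift_const H \<alpha> * D powr (H + \<alpha> - 1))\<^sup>2)"
proof -
  define \<delta> where "\<delta> = d - c"
  have \<delta>: "0 < \<delta>" using c by (simp add: \<delta>_def)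
  define g where "g u = (if u < d + \<delta> then (u - d) powr (H + \<alpha> - 1 - 1)
    else (2 - \<alpha>) * \<delta> * (u - d) powr (H + \<alpha> - 1 - 2))" for u
  have gpos: "0 < g u" if "d < u" for u
    using that \<alpha>1 \<delta> by (simp add: g_def)
  have gbd: "\<bar>(u - c) powr (\<alpha> - 2) - (u - d) powr (\<alpha> - 2)\<bar> * \<bar>u - d\<bar> powr H \<le> g u" if "d < u" for u
    using kernel_difference_le[of c d u \<alpha> H] that c \<alpha>1 by (simp add: g_def \<delta>_def)
  have "(\<integral>\<^sup>+u. ennreal (g u) * indicator {d<..<b} u \<partial>lborel)
      \<le> ennreal ((1 / (H + \<alpha> - 1) + (2 - \<alpha>) / (1 - (H + \<alpha> - 1))) * \<delta> powr (H + \<alpha> - 1))"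
    unfolding g_def using gamma_pos gamma_less_one \<delta> \<alpha>1 by (intro nn_integral_two_regime_bound) auto
  also have "(1 / (H + \<alpha> - 1) + (2 - \<alpha>) / (1 - (H + \<alpha> - 1))) * \<delta> powr (H + \<alpha> - 1)
      \<le> X_shift_const H \<alpha> * D powr (H + \<alpha> - 1)"
  proof (intro mult_mono)
    have "(2 - \<alpha>) / (1 - (H + \<alpha> - 1)) \<le> 2 / (1 - (H + \<alpha> - 1))"
      using gamma_less_one \<alpha>0 H1 by (intro divide_right_mono) auto
    then show "1 / (H + \<alpha> - 1) + (2 - \<alpha>) / (1 - (H + \<alpha> - 1)) \<le> X_shift_const H \<alpha>"
      using shift_const_ge(4) by linarith
  qed (use \<delta> D gamma_pos shift_const_ge in \<open>auto simp: \<delta>_def intro: powr_mono2\<close>)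
  finally have gint: "(\<integral>\<^sup>+u. ennreal (g u) * indicator {d<..<b} u \<partial>lborel)
      \<le> ennreal (X_shift_const H \<alpha> * D powr (H + \<alpha> - 1))"
    by (simp add: ennreal_leI)
  have "0 \<le> X_shift_const H \<alpha> * D powr (H + \<alpha> - 1)"
    using shift_const_ge by simp
  note bound = increment_integral_bound[where \<phi>="\<lambda>u. u"
      and w="\<lambda>u. (u - c) powr (\<alpha> - 2) - (u - d) powr (\<alpha> - 2)", OF _ c(3) this _ _ _ _ gpos gbd gint]
  have g_meas: "g \<in> borel_measurable borel"
    unfolding g_def[abs_def] by measurable
  show "AE \<omega> in M. set_integrable lborel {d<..<b}
      (\<lambda>u. (B (max 0 u) \<omega> - B d \<omega>) * ((u - c) powr (\<alpha> - 2) - (u - d) powr (\<alpha> - 2)))"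
    "(\<lambda>\<omega>. LBINT u=d..b. (B (max 0 u) \<omega> - B d \<omega>) * ((u - c) powr (\<alpha> - 2) - (u - d) powr (\<alpha> - 2)))
      \<in> borel_measurable M"
    "msq (\<lambda>\<omega>. LBINT u=d..b. (B (max 0 u) \<omega> - B d \<omega>) * ((u - c) powr (\<alpha> - 2) - (u - d) powr (\<alpha> - 2)))
      \<le> ennreal ((X_shift_const H \<alpha> * D powr (H + \<alpha> - 1))\<^sup>2)"
    by (rule bound; use c g_meas in \<open>auto\<close>)+
qed

lemma X_left_shift_eq:
  assumes c: "0 \<le> c" "c < d" "d < b"
  shows "AE \<omega> in M. fbm_X \<alpha> B b c \<omega> - fbm_X \<alpha> B b d \<omega>
    = (b - c) powr (\<alpha> - 1) * (B d \<omega> - B c \<omega>)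
      + ((b - c) powr (\<alpha> - 1) - (b - d) powr (\<alpha> - 1)) * (B b \<omega> - B d \<omega>)
      + (LBINT u=c..d. Xkernel c \<omega> u)
      + (LBINT u=d..b. (B d \<omega> - B c \<omega>) * (u - c) powr (\<alpha> - 2))
      + (LBINT u=d..b. (B (max 0 u) \<omega> - B d \<omega>) * ((u - c) powr (\<alpha> - 2) - (u - d) powr (\<alpha> - 2)))"
proof -
  have cb: "c < b" and d0: "0 \<le> d" using c by auto
  define F4 where "F4 \<omega> u = (B d \<omega> - B c \<omega>) * (u - c) powr (\<alpha> - 2)" for \<omega> u
  define F5 where "F5 \<omega> u = (B (max 0 u) \<omega> - B d \<omega>) * ((u - c) powr (\<alpha> - 2) - (u - d) powr (\<alpha> - 2))" for \<omega> u
  have "AE \<omega> in M. set_integrable lborel {d<..<b} (F4 \<omega>)"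
    "AE \<omega> in M. set_integrable lborel {d<..<b} (F5 \<omega>)"
    using frozen_increment_integral_bound(1)[OF c order_refl] kernel_difference_integral_bound(1)[OF c order_refl]
    by (simp_all add: F4_def[abs_def] F5_def[abs_def])
  with Xkernel_integral(1)[OF c(1) cb] Xkernel_integral(1)[OF d0 c(3)]
  show ?thesis
  proof eventually_elim
    case (elim \<omega>)
    have integrable: "interval_lebesgue_integrable lborel (ereal d) (ereal b) (Xkernel d \<omega>)"
      "interval_lebesgue_integrable lborel (ereal d) (ereal b) (F4 \<omega>)"
      "interval_lebesgue_integrable lborel (ereal d) (ereal b) (F5 \<omega>)"
      using elim c by (simp_all add: interval_lebesgue_integrable_def)
    have "(LBINT u=c..d. Xkernel c \<omega> u) + (LBINT u=d..b. Xkernel c \<omega> u) = (LBINT u=c..b. Xkernel c \<omega> u)"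
      by (rule interval_integral_sum)
         (use elim c in \<open>simp add: interval_lebesgue_integrable_def min_def max_def\<close>)
    moreover have "Xkernel c \<omega> = (\<lambda>u. Xkernel d \<omega> u + (F4 \<omega> u + F5 \<omega> u))"
      using d0 by (auto simp: Xkernel_def F4_def F5_def algebra_simps)
    then have "(LBINT u=d..b. Xkernel c \<omega> u)
        = (LBINT u=d..b. Xkernel d \<omega> u) + ((LBINT u=d..b. F4 \<omega> u) + (LBINT u=d..b. F5 \<omega> u))"
      using integrable by (simp add: interval_lebesgue_integral_add(2))
    ultimately show ?case
      using X_eq[OF c(1) cb, of \<omega>] X_eq[OF d0 c(3), of \<omega>] by (simp add: F4_def F5_def algebra_simps)
  qed
qed

text \<open>If the left end point moves by at most \<open>D \<le> b - d\<close>, \<open>X\<close> changes by \<open>O(D^\<gamma>)\<close>;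
  each of the five terms has standard deviation at most \<open>X_shift_const H \<alpha> \<cdot> D^\<gamma>\<close>.\<close>
lemma X_left_shift_bound:
  assumes c: "0 \<le> c" "c < d" "d < b" and D: "d - c \<le> D" "D \<le> b - d" "0 < D"
  shows "msq (\<lambda>\<omega>. fbm_X \<alpha> B b c \<omega> - fbm_X \<alpha> B b d \<omega>)
    \<le> ennreal (46 * (X_shift_const H \<alpha>)\<^sup>2 * D powr (2 * (H + \<alpha> - 1)))"
proof -
  define K where "K = X_shift_const H \<alpha> * D powr (H + \<alpha> - 1)"
  have R_le_K: "D powr (H + \<alpha> - 1) \<le> K"
    using mult_right_mono[OF shift_const_ge(1), of "D powr (H + \<alpha> - 1)"] by (simp add: K_def)
  have short: "msq (\<lambda>\<omega>. (b - c) powr (\<alpha> - 1) * (B d \<omega> - B c \<omega>)) \<le> ennreal (K\<^sup>2)"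
    using c D \<alpha>1 H0 R_le_K
    by (intro msq_increment_bound order_trans[OF short_increment_weight_le]) auto
  have long: "msq (\<lambda>\<omega>. ((b - c) powr (\<alpha> - 1) - (b - d) powr (\<alpha> - 1)) * (B b \<omega> - B d \<omega>)) \<le> ennreal (K\<^sup>2)"
    using c D \<alpha>0 \<alpha>1 H0 H1 R_le_K
    by (intro msq_increment_bound order_trans[OF long_increment_weight_le]) auto
  have "msq (\<lambda>\<omega>. LBINT u=c..d. Xkernel c \<omega> u) \<le> ennreal (((d - c) powr (H + \<alpha> - 1) / (H + \<alpha> - 1))\<^sup>2)"
    using Xkernel_integral(3)[OF c(1,2)] .
  also have "\<dots> \<le> ennreal (K\<^sup>2)"
  proof (intro ennreal_leI power_mono)
    have "(d - c) powr (H + \<alpha> - 1) / (H + \<alpha> - 1) = 1 / (H + \<alpha> - 1) * (d - c) powr (H + \<alpha> - 1)"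
      by simp
    also have "\<dots> \<le> K"
      unfolding K_def using shift_const_ge(1,2) c D gamma_pos by (intro mult_mono powr_mono2) auto
    finally show "(d - c) powr (H + \<alpha> - 1) / (H + \<alpha> - 1) \<le> K" .
  qed (use gamma_pos in simp)
  finally have kernel: "msq (\<lambda>\<omega>. LBINT u=c..d. Xkernel c \<omega> u) \<le> ennreal (K\<^sup>2)" .
  note [measurable] = Xkernel_integral(2)[OF c(1,2)] frozen_increment_integral_bound(2)[OF c D(1)]
    kernel_difference_integral_bound(2)[OF c D(1)]
  have "msq (\<lambda>\<omega>. fbm_X \<alpha> B b c \<omega> - fbm_X \<alpha> B b d \<omega>)
      = msq (\<lambda>\<omega>. (b - c) powr (\<alpha> - 1) * (B d \<omega> - B c \<omega>)
      + ((b - c) powr (\<alpha> - 1) - (b - d) powr (\<alpha> - 1)) * (B b \<omega> - B d \<omega>)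
      + (LBINT u=c..d. Xkernel c \<omega> u)
      + (LBINT u=d..b. (B d \<omega> - B c \<omega>) * (u - c) powr (\<alpha> - 2))
      + (LBINT u=d..b. (B (max 0 u) \<omega> - B d \<omega>) * ((u - c) powr (\<alpha> - 2) - (u - d) powr (\<alpha> - 2))))"
    using X_left_shift_eq[OF c] by (rule msq_cong_AE)
  also have "\<dots> \<le> ennreal (2 * (2 * (2 * (2 * K\<^sup>2 + 2 * K\<^sup>2) + 2 * K\<^sup>2) + 2 * K\<^sup>2) + 2 * K\<^sup>2)"
    using frozen_increment_integral_bound(3)[OF c D(1)] kernel_difference_integral_bound(3)[OF c D(1)]
    by (intro msq_add_bound short long kernel) (auto simp: K_def)
  also have "2 * (2 * (2 * (2 * K\<^sup>2 + 2 * K\<^sup>2) + 2 * K\<^sup>2) + 2 * K\<^sup>2) + 2 * K\<^sup>2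
      = 46 * (X_shift_const H \<alpha>)\<^sup>2 * D powr (2 * (H + \<alpha> - 1))"
    using D by (simp add: K_def power_mult_distrib square_powr)
  finally show ?thesis .
qed

subsection \<open>The uniform Hoelder estimate\<close>

text \<open>If one of the intervals has length at most \<open>3D\<close>, both have length at most \<open>5D\<close> and the
  moment bound of part (1) suffices.\<close>
lemma X_increment_short_interval:
  assumes t: "0 \<le> t2" "t2 < t1" and s: "0 \<le> s2" "s2 < s1"
    and D: "\<bar>t1 - s1\<bar> \<le> D" "\<bar>t2 - s2\<bar> \<le> D" and short: "t1 - t2 \<le> 3 * D \<or> s1 - s2 \<le> 3 * D"
  shows "msq (\<lambda>\<omega>. fbm_X \<alpha> B t1 t2 \<omega> - fbm_X \<alpha> B s1 s2 \<omega>)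
    \<le> ennreal (100 * X_moment_const H \<alpha> * D powr (2 * (H + \<alpha> - 1)))"
proof -
  define K0 where "K0 = X_moment_const H \<alpha>"
  have K0: "0 \<le> K0" by (simp add: K0_def X_moment_const_def)
  have moment: "msq (fbm_X \<alpha> B b c) \<le> ennreal (25 * K0 * D powr (2 * (H + \<alpha> - 1)))"
    if "0 \<le> c" "c < b" "b - c \<le> 5 * D" for b c
  proof -
    have "(b - c) powr (2 * (H + \<alpha> - 1)) \<le> (5 * D) powr (2 * (H + \<alpha> - 1))"
      using that gamma_pos by (intro powr_mono2) auto
    also have "\<dots> = 5 powr (2 * (H + \<alpha> - 1)) * D powr (2 * (H + \<alpha> - 1))"
      using that by (simp add: powr_mult)
    also have "\<dots> \<le> 25 * D powr (2 * (H + \<alpha> - 1))"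
      using powr_mono[of "2 * (H + \<alpha> - 1)" 2 5] gamma_less_one by (intro mult_right_mono) auto
    finally have "K0 * (b - c) powr (2 * (H + \<alpha> - 1)) \<le> 25 * K0 * D powr (2 * (H + \<alpha> - 1))"
      using K0 by (simp add: mult_left_mono mult.assoc mult.left_commute)
    then show ?thesis
      using X_moment[OF that(1,2)] by (simp add: K0_def order_trans ennreal_leI)
  qed
  have "t1 - t2 \<le> 5 * D" "s1 - s2 \<le> 5 * D" using D short by auto
  then have "msq (\<lambda>\<omega>. fbm_X \<alpha> B t1 t2 \<omega> + - fbm_X \<alpha> B s1 s2 \<omega>)
      \<le> ennreal (2 * (25 * K0 * D powr (2 * (H + \<alpha> - 1))) + 2 * (25 * K0 * D powr (2 * (H + \<alpha> - 1))))"
    using moment[of t2 t1] moment[of s2 s1] t s K0 X_measurable[OF t] X_measurable[OF s]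
    by (intro msq_add_bound) (auto simp: msq_def)
  then show ?thesis by (simp add: K0_def mult.assoc)
qed

text \<open>If both intervals are longer than \<open>3D\<close>, move first the right end point (\<open>t1 \<leadsto> s1\<close>)
  and then the left one (\<open>t2 \<leadsto> s2\<close>).\<close>
lemma X_increment_long_intervals:
  assumes t: "0 \<le> t2" "t2 < t1" and s: "0 \<le> s2" "s2 < s1"
    and D: "\<bar>t1 - s1\<bar> \<le> D" "\<bar>t2 - s2\<bar> \<le> D" "0 < D" and long: "3 * D < t1 - t2" "3 * D < s1 - s2"
  shows "msq (\<lambda>\<omega>. fbm_X \<alpha> B t1 t2 \<omega> - fbm_X \<alpha> B s1 s2 \<omega>)
    \<le> ennreal ((20 + 92 * (X_shift_const H \<alpha>)\<^sup>2) * D powr (2 * (H + \<alpha> - 1)))"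
proof -
  define P where "P = D powr (2 * (H + \<alpha> - 1))"
  have mid: "0 \<le> t2" "t2 < s1" using t s long D by auto
  have right: "msq (\<lambda>\<omega>. fbm_X \<alpha> B t1 t2 \<omega> - fbm_X \<alpha> B s1 t2 \<omega>) \<le> ennreal (10 * P)"
  proof (cases "t1 \<le> s1")
    case True
    then show ?thesis
      using X_right_shift_bound[of t2 t1 s1 D] t D long
      by (subst msq_minus_commute) (auto simp: P_def)
  next
    case False
    then show ?thesis
      using X_right_shift_bound[of t2 s1 t1 D] t s D long by (auto simp: P_def)
  qed
  have left: "msq (\<lambda>\<omega>. fbm_X \<alpha> B s1 t2 \<omega> - fbm_X \<alpha> B s1 s2 \<omega>) \<le> ennreal (46 * (X_shift_const H \<alpha>)\<^sup>2 * P)"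
  proof (cases t2 s2 rule: linorder_cases)
    case less
    then show ?thesis
      using X_left_shift_bound[of t2 s2 s1 D] t s D long by (auto simp: P_def)
  next
    case equal
    then show ?thesis by (simp add: msq_def)
  next
    case greater
    then show ?thesis
      using X_left_shift_bound[of s2 t2 s1 D] t s D long
      by (subst msq_minus_commute) (auto simp: P_def)
  qed
  have "msq (\<lambda>\<omega>. (fbm_X \<alpha> B t1 t2 \<omega> - fbm_X \<alpha> B s1 t2 \<omega>) + (fbm_X \<alpha> B s1 t2 \<omega> - fbm_X \<alpha> B s1 s2 \<omega>))
      \<le> ennreal (2 * (10 * P) + 2 * (46 * (X_shift_const H \<alpha>)\<^sup>2 * P))"
    using X_measurable[OF t] X_measurable[OF s] X_measurable[OF mid]
    by (intro msq_add_bound right left) (auto simp: P_def)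
  then show ?thesis
    by (simp add: P_def algebra_simps)
qed

lemma X_holder:
  assumes t: "0 \<le> t2" "t2 < t1" and s: "0 \<le> s2" "s2 < s1"
  shows "msq (\<lambda>\<omega>. fbm_X \<alpha> B t1 t2 \<omega> - fbm_X \<alpha> B s1 s2 \<omega>)
    \<le> ennreal (X_holder_const H \<alpha> * (max \<bar>t1 - s1\<bar> \<bar>t2 - s2\<bar>) powr (2 * (H + \<alpha> - 1)))"
proof -
  define D where "D = max \<bar>t1 - s1\<bar> \<bar>t2 - s2\<bar>"
  have D: "\<bar>t1 - s1\<bar> \<le> D" "\<bar>t2 - s2\<bar> \<le> D" by (auto simp: D_def)
  have nonneg: "0 \<le> X_moment_const H \<alpha>" "0 \<le> D powr (2 * (H + \<alpha> - 1))"
    by (simp_all add: X_moment_const_def)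
  consider "D = 0" | "0 < D" "t1 - t2 \<le> 3 * D \<or> s1 - s2 \<le> 3 * D" | "0 < D" "3 * D < t1 - t2" "3 * D < s1 - s2"
    using D by fastforce
  then have "msq (\<lambda>\<omega>. fbm_X \<alpha> B t1 t2 \<omega> - fbm_X \<alpha> B s1 s2 \<omega>) \<le> ennreal (X_holder_const H \<alpha> * D powr (2 * (H + \<alpha> - 1)))"
  proof cases
    case 1
    then have "t1 = s1" "t2 = s2" using D by auto
    then show ?thesis by (simp add: msq_def)
  next
    case 2
    then have "msq (\<lambda>\<omega>. fbm_X \<alpha> B t1 t2 \<omega> - fbm_X \<alpha> B s1 s2 \<omega>)
        \<le> ennreal (100 * X_moment_const H \<alpha> * D powr (2 * (H + \<alpha> - 1)))"
      using X_increment_short_interval[OF t s D] by simp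
    also have "\<dots> \<le> ennreal (X_holder_const H \<alpha> * D powr (2 * (H + \<alpha> - 1)))"
      using nonneg by (intro ennreal_leI mult_right_mono) (auto simp: X_holder_const_def)
    finally show ?thesis .
  next
    case 3
    then have "msq (\<lambda>\<omega>. fbm_X \<alpha> B t1 t2 \<omega> - fbm_X \<alpha> B s1 s2 \<omega>)
        \<le> ennreal ((20 + 92 * (X_shift_const H \<alpha>)\<^sup>2) * D powr (2 * (H + \<alpha> - 1)))"
      using X_increment_long_intervals[OF t s D] by simp
    also have "\<dots> \<le> ennreal (X_holder_const H \<alpha> * D powr (2 * (H + \<alpha> - 1)))"
      using nonneg by (intro ennreal_leI mult_right_mono) (auto simp: X_holder_const_def)
    finally show ?thesis .
  qed
  then show ?thesis by (simp add: D_def)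
qed

end

lemma index_distance_le_max:
  fixes t1 t2 s1 s2 :: real
  assumes "0 \<le> t2" "t2 < t1" "0 \<le> s2" "s2 < s1"
  shows "max \<bar>t1 - s1\<bar> \<bar>t2 - s2\<bar> \<le> max t1 s1"
  using assms by auto

lemma fbm_X_holder_bound:
  fixes H \<alpha> :: real and M :: "'a measure"
  assumes "0 < H" "H < 1" "1 - H < \<alpha>" "\<alpha> < 1" "fbm M H B"
    and "0 \<le> t2" "t2 < t1" "0 \<le> s2" "s2 < s1"
  shows "(\<integral>\<^sup>+\<omega>. ennreal ((fbm_X \<alpha> B t1 t2 \<omega> - fbm_X \<alpha> B s1 s2 \<omega>)\<^sup>2) \<partial>M)
    \<le> ennreal (X_holder_const H \<alpha> * (max \<bar>t1 - s1\<bar> \<bar>t2 - s2\<bar>) powr (2 * (H + \<alpha> - 1)))"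
proof -
  interpret fbm_functional M H \<alpha> B
    using assms by unfold_locales
  show ?thesis
    using X_holder[OF assms(6-9)] by (simp add: msq_def)
qed

lemma X_holder_const_nonneg: "0 \<le> X_holder_const H \<alpha>"
  by (simp add: X_holder_const_def X_moment_const_def)

lemma fbm_X_second_moment:
  fixes H \<alpha> :: real
  assumes "0 < H" "H < 1" "1 - H < \<alpha>" "\<alpha> < 1"
  shows "\<exists>C. \<forall>(M::'a measure) B. fbm M H B \<longrightarrow>
       (\<forall>t1 t2. 0 \<le> t2 \<and> t2 < t1 \<longrightarrow>
          (\<integral>\<^sup>+\<omega>. ennreal ((fbm_X \<alpha> B t1 t2 \<omega>)\<^sup>2) \<partial>M)
            \<le> ennreal ((C * (t1 - t2) powr (H + \<alpha> - 1))\<^sup>2))"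
proof (intro exI[of _ "sqrt (X_moment_const H \<alpha>)"] allI impI, elim conjE)
  fix M :: "'a measure" and B and t1 t2 :: real assume "fbm M H B" and t: "0 \<le> t2" "t2 < t1"
  then interpret fbm_functional M H \<alpha> B
    using assms by unfold_locales
  have "0 \<le> X_moment_const H \<alpha>" by (simp add: X_moment_const_def)
  then show "(\<integral>\<^sup>+\<omega>. ennreal ((fbm_X \<alpha> B t1 t2 \<omega>)\<^sup>2) \<partial>M)
      \<le> ennreal ((sqrt (X_moment_const H \<alpha>) * (t1 - t2) powr (H + \<alpha> - 1))\<^sup>2)"
    using X_moment[OF t] t by (simp add: msq_def power_mult_distrib square_powr)
qed

text \<open>Part 2(a) of the theorem.\<close>
lemma fbm_X_increment_with_epsilon:
  fixes H \<alpha> :: real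
  assumes "0 < H" "H < 1" "1 - H < \<alpha>" "\<alpha> < 1"
  shows "\<exists>C. \<forall>(M::'a measure) B. fbm M H B \<longrightarrow>
         (\<forall>t1 t2 s1 s2 \<epsilon>. 0 \<le> t2 \<and> t2 < t1 \<and> 0 \<le> s2 \<and> s2 < s1 \<and>
            0 < \<epsilon> \<and> \<epsilon> < min (H + \<alpha> - 1) (1/2) \<longrightarrow>
            (\<integral>\<^sup>+\<omega>. ennreal ((fbm_X \<alpha> B t1 t2 \<omega> - fbm_X \<alpha> B s1 s2 \<omega>)\<^sup>2) \<partial>M)
              \<le> ennreal ((C * (1 + 1/\<epsilon>) * (max \<bar>t1 - s1\<bar> \<bar>t2 - s2\<bar>) powr (H + \<alpha> - 1 - \<epsilon>)
                          * (max t1 s1) powr \<epsilon>)\<^sup>2))"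
proof (intro exI[of _ "sqrt (X_holder_const H \<alpha>)"] allI impI, elim conjE)
  fix M :: "'a measure" and B and t1 t2 s1 s2 \<epsilon> :: real
  assume "fbm M H B" and ts: "0 \<le> t2" "t2 < t1" "0 \<le> s2" "s2 < s1"
    and \<epsilon>: "0 < \<epsilon>" "\<epsilon> < min (H + \<alpha> - 1) (1/2)"
  have "(\<integral>\<^sup>+\<omega>. ennreal ((fbm_X \<alpha> B t1 t2 \<omega> - fbm_X \<alpha> B s1 s2 \<omega>)\<^sup>2) \<partial>M)
      \<le> ennreal (X_holder_const H \<alpha> * (max \<bar>t1 - s1\<bar> \<bar>t2 - s2\<bar>) powr (2 * ((H + \<alpha> - 1 - \<epsilon>) + \<epsilon>)))"
    using fbm_X_holder_bound[OF assms \<open>fbm M H B\<close> ts] by simp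
  also have "\<dots> \<le> ennreal ((sqrt (X_holder_const H \<alpha>) * (1 + 1/\<epsilon>) * (max \<bar>t1 - s1\<bar> \<bar>t2 - s2\<bar>) powr (H + \<alpha> - 1 - \<epsilon>)
                          * (max t1 s1) powr \<epsilon>)\<^sup>2)"
    using X_holder_const_nonneg index_distance_le_max[OF ts] \<epsilon>
    by (intro ennreal_leI powr_split_bound) auto
  finally show "(\<integral>\<^sup>+\<omega>. ennreal ((fbm_X \<alpha> B t1 t2 \<omega> - fbm_X \<alpha> B s1 s2 \<omega>)\<^sup>2) \<partial>M)
      \<le> ennreal ((sqrt (X_holder_const H \<alpha>) * (1 + 1/\<epsilon>) * (max \<bar>t1 - s1\<bar> \<bar>t2 - s2\<bar>) powr (H + \<alpha> - 1 - \<epsilon>)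
                          * (max t1 s1) powr \<epsilon>)\<^sup>2)" .
qed

text \<open>Part 2(b) of the theorem: for \<open>\<gamma> > 1/2\<close>, \<open>D^\<gamma> \<le> D^(1/2) (max t1 s1)^(\<gamma>-1/2)\<close>.\<close>
lemma fbm_X_increment_square_root:
  fixes H \<alpha> :: real
  assumes "0 < H" "H < 1" "1 - H < \<alpha>" "\<alpha> < 1" "H + \<alpha> > 3/2"
  shows "\<exists>C. \<forall>(M::'a measure) B. fbm M H B \<longrightarrow>
         (\<forall>t1 t2 s1 s2. 0 \<le> t2 \<and> t2 < t1 \<and> 0 \<le> s2 \<and> s2 < s1 \<longrightarrow>
            (\<integral>\<^sup>+\<omega>. ennreal ((fbm_X \<alpha> B t1 t2 \<omega> - fbm_X \<alpha> B s1 s2 \<omega>)\<^sup>2) \<partial>M)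
              \<le> ennreal ((C * (max \<bar>t1 - s1\<bar> \<bar>t2 - s2\<bar>) powr (1/2)
                          * (max t1 s1) powr (H + \<alpha> - 3/2))\<^sup>2))"
proof (intro exI[of _ "sqrt (X_holder_const H \<alpha>)"] allI impI, elim conjE)
  fix M :: "'a measure" and B and t1 t2 s1 s2 :: real
  assume "fbm M H B" and ts: "0 \<le> t2" "t2 < t1" "0 \<le> s2" "s2 < s1"
  have "(\<integral>\<^sup>+\<omega>. ennreal ((fbm_X \<alpha> B t1 t2 \<omega> - fbm_X \<alpha> B s1 s2 \<omega>)\<^sup>2) \<partial>M)
      \<le> ennreal (X_holder_const H \<alpha> * (max \<bar>t1 - s1\<bar> \<bar>t2 - s2\<bar>) powr (2 * (1/2 + (H + \<alpha> - 3/2))))"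
    using fbm_X_holder_bound[OF assms(1-4) \<open>fbm M H B\<close> ts] by simp
  also have "\<dots> \<le> ennreal ((sqrt (X_holder_const H \<alpha>) * 1 * (max \<bar>t1 - s1\<bar> \<bar>t2 - s2\<bar>) powr (1/2)
                          * (max t1 s1) powr (H + \<alpha> - 3/2))\<^sup>2)"
    using X_holder_const_nonneg index_distance_le_max[OF ts] assms(5)
    by (intro ennreal_leI powr_split_bound) auto
  finally show "(\<integral>\<^sup>+\<omega>. ennreal ((fbm_X \<alpha> B t1 t2 \<omega> - fbm_X \<alpha> B s1 s2 \<omega>)\<^sup>2) \<partial>M)
      \<le> ennreal ((sqrt (X_holder_const H \<alpha>) * (max \<bar>t1 - s1\<bar> \<bar>t2 - s2\<bar>) powr (1/2)
                          * (max t1 s1) powr (H + \<alpha> - 3/2))\<^sup>2)"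
    by simp
qed

theorem lemmaA2:
  fixes H \<alpha> :: real
  assumes "0 < H" "H < 1" "1 - H < \<alpha>" "\<alpha> < 1"
  shows
   "(\<exists>C. \<forall>(M::'a measure) B. fbm M H B \<longrightarrow>
       (\<forall>t1 t2. 0 \<le> t2 \<and> t2 < t1 \<longrightarrow>
          (\<integral>\<^sup>+\<omega>. ennreal ((fbm_X \<alpha> B t1 t2 \<omega>)\<^sup>2) \<partial>M)
            \<le> ennreal ((C * (t1 - t2) powr (H + \<alpha> - 1))\<^sup>2)))
    \<and> (H + \<alpha> \<le> 3/2 \<longrightarrow>
       (\<exists>C. \<forall>(M::'a measure) B. fbm M H B \<longrightarrow>
         (\<forall>t1 t2 s1 s2 \<epsilon>. 0 \<le> t2 \<and> t2 < t1 \<and> 0 \<le> s2 \<and> s2 < s1 \<and>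
            0 < \<epsilon> \<and> \<epsilon> < min (H + \<alpha> - 1) (1/2) \<longrightarrow>
            (\<integral>\<^sup>+\<omega>. ennreal ((fbm_X \<alpha> B t1 t2 \<omega> - fbm_X \<alpha> B s1 s2 \<omega>)\<^sup>2) \<partial>M)
              \<le> ennreal ((C * (1 + 1/\<epsilon>) * (max \<bar>t1 - s1\<bar> \<bar>t2 - s2\<bar>) powr (H + \<alpha> - 1 - \<epsilon>)
                          * (max t1 s1) powr \<epsilon>)\<^sup>2))))
    \<and> (H + \<alpha> > 3/2 \<longrightarrow>
       (\<exists>C. \<forall>(M::'a measure) B. fbm M H B \<longrightarrow>
         (\<forall>t1 t2 s1 s2. 0 \<le> t2 \<and> t2 < t1 \<and> 0 \<le> s2 \<and> s2 < s1 \<longrightarrow>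
            (\<integral>\<^sup>+\<omega>. ennreal ((fbm_X \<alpha> B t1 t2 \<omega> - fbm_X \<alpha> B s1 s2 \<omega>)\<^sup>2) \<partial>M)
              \<le> ennreal ((C * (max \<bar>t1 - s1\<bar> \<bar>t2 - s2\<bar>) powr (1/2)
                          * (max t1 s1) powr (H + \<alpha> - 3/2))\<^sup>2))))"
  using fbm_X_second_moment[OF assms] fbm_X_increment_with_epsilon[OF assms]
    fbm_X_increment_square_root[OF assms]
  by blast

end
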